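(* The co-Finsleroid Indicatrix $\hat{\mathcal I}=\{\hat R: H(g;\hat R)=1\}$ in the dual space, equipped with the Riemannian metric induced by $g^{pq}(g;\hat R)=\frac12\partial^2H^2/\partial R_p\partial R_q$, is a space of constant positive curvature, and its curvature equals that of the Finsleroid Indicatrix: $$\mathcal R_{\text{co-Finsleroid Indicatrix}}=h^2=1-\tfrac14g^2=-\tfrac14D_{\{\hat B\}},\qquad 0<\mathcal R_{\text{co-Finsleroid Indicatrix}}\le1,$$ where $D_{\{\hat B\}}=g^2-4$ is the discriminant of $\hat B=\hat Z^2-g\hat q\hat Z+\hat q^2$ as a quadratic form in $(\hat Z,\hat q)$.
   Context: Let $N\ge2$. The dual space consists of $\hat R=(R_1,\dots,R_N)\in\mathbb{R}^N$; write $\hat Z=R_N$; indices $a,b$ run over $1,\dots,N-1$, $p,q$ over $1,\dots,N$, repeated indices summed. Fix a symmetric positive-definite matrix $(r^{ab})$ and put $\hat q=\sqrt{r^{ab}R_aR_b}$. Fix $g\in(-2,2)$, $h=\sqrt{1-g^2/4}$, $G=g/h$. Define $\hat B=\hat Z^2-g\hat q\hat Z+\hat q^2$, $\hat A=\hat Z-\frac12g\hat q$, $\hat\Phi=\arctan(\hat A/(h\hat q))$ for $\hat q>0$ ($\hat\Phi=\pm\pi/2$ if $\hat q=0$, $\hat Z\gtrless0$), $\hat J=e^{-\frac12G\hat\Phi}$ and the Finsleroid Hamiltonian function $H(g;\hat R)=\sqrt{\hat B}\,\hat J$. "Curvature" means the constant $\kappa$ with Riemann tensor $\kappa(\gamma_{ik}\gamma_{jl}-\gamma_{il}\gamma_{jk})$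 for the induced metric $\gamma$. *)

theory Defs
  imports "HOL-Analysis.Analysis"
begin

(* Dual space R^N is modelled as  (real^'m) \<times> real :  fst = (R_1..R_{N-1}), snd = Z = R_N,
   so N - 1 = CARD('m) \<ge> 1, i.e. N \<ge> 2. *)

definition qhat :: "real^'m^'m \<Rightarrow> real^'m \<Rightarrow> real" where
  "qhat r R = sqrt (\<Sum>a\<in>UNIV. \<Sum>b\<in>UNIV. r$a$b * R$a * R$b)"

definition hh :: "real \<Rightarrow> real" where
  "hh g = sqrt (1 - g^2/4)"

definition GG :: "real \<Rightarrow> real" where
  "GG g = g / hh g"

definition Bhat :: "real \<Rightarrow> real^'m^'m \<Rightarrow> (real^'m) \<times> real \<Rightarrow> real" where
  "Bhat g r Rh = (snd Rh)^2 - g * qhat r (fst Rh) * snd Rh + (qhat r (fst Rh))^2"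

definition Ahat :: "real \<Rightarrow> real^'m^'m \<Rightarrow> (real^'m) \<times> real \<Rightarrow> real" where
  "Ahat g r Rh = snd Rh - g * qhat r (fst Rh) / 2"

definition Phihat :: "real \<Rightarrow> real^'m^'m \<Rightarrow> (real^'m) \<times> real \<Rightarrow> real" where
  "Phihat g r Rh =
     (if qhat r (fst Rh) > 0 then arctan (Ahat g r Rh / (hh g * qhat r (fst Rh)))
      else if snd Rh \<ge> 0 then pi/2 else - pi/2)"

definition Jhat :: "real \<Rightarrow> real^'m^'m \<Rightarrow> (real^'m) \<times> real \<Rightarrow> real" where
  "Jhat g r Rh = exp (- (1/2) * GG g * Phihat g r Rh)"

definition FH :: "real \<Rightarrow> real^'m^'m \<Rightarrow> (real^'m) \<times> real \<Rightarrow> real" where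
  "FH g r Rh = sqrt (Bhat g r Rh) * Jhat g r Rh"

text \<open>Discriminant of the quadratic form Z^2 - g q Z + q^2 in (Z,q): b^2 - 4ac.\<close>
definition discB :: "real \<Rightarrow> real" where
  "discB g = (- g)^2 - 4 * 1 * 1"

text \<open>Second directional derivative: d^2F(x)[v,w].  Contracted with components,
  (1/2) of it applied to F = H^2 is g^{pq} v_p w_q.\<close>
definition hess2 :: "('v::real_normed_vector \<Rightarrow> real) \<Rightarrow> 'v \<Rightarrow> 'v \<Rightarrow> 'v \<Rightarrow> real" where
  "hess2 F x v w = deriv (\<lambda>s. deriv (\<lambda>t. F (x + s *\<^sub>R v + t *\<^sub>R w)) 0) 0"

definition pd :: "'m::finite \<Rightarrow> (real^'m \<Rightarrow> real) \<Rightarrow> real^'m \<Rightarrow> real" where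
  "pd i f u = deriv (\<lambda>t. f (u + t *\<^sub>R axis i 1)) 0"

fun pds :: "'m::finite list \<Rightarrow> (real^'m \<Rightarrow> real) \<Rightarrow> real^'m \<Rightarrow> real" where
  "pds [] f = f"
| "pds (i # is) f = pd i (pds is f)"

definition smooth_fun_on :: "(real^'m::finite) set \<Rightarrow> (real^'m \<Rightarrow> real) \<Rightarrow> bool" where
  "smooth_fun_on U f \<longleftrightarrow>
     (\<forall>is. continuous_on U (pds is f) \<and>
       (\<forall>i. \<forall>u\<in>U. (\<lambda>t. pds is f (u + t *\<^sub>R axis i 1)) differentiable (at 0)))"

definition dphi :: "(real^'m \<Rightarrow> (real^'m) \<times> real) \<Rightarrow> 'm::finite \<Rightarrow> real^'m \<Rightarrow> (real^'m) \<times> real" where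
  "dphi \<phi> i u = ((\<chi> a. pd i (\<lambda>v. fst (\<phi> v) $ a) u), pd i (\<lambda>v. snd (\<phi> v)) u)"

text \<open>Smooth local parametrization (immersion) of the co-Finsleroid indicatrix H = 1,
  away from the axis q = 0 where H^2 fails to be C^2.\<close>
definition coindicatrix_chart ::
  "real \<Rightarrow> real^'m^'m \<Rightarrow> (real^'m::finite) set \<Rightarrow> (real^'m \<Rightarrow> (real^'m) \<times> real) \<Rightarrow> bool" where
  "coindicatrix_chart g r U \<phi> \<longleftrightarrow>
     open U \<and>
     (\<forall>a. smooth_fun_on U (\<lambda>u. fst (\<phi> u) $ a)) \<and> smooth_fun_on U (\<lambda>u. snd (\<phi> u)) \<and>
     (\<forall>u\<in>U. FH g r (\<phi> u) = 1 \<and> qhat r (fst (\<phi> u)) > 0) \<and>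
     (\<forall>u\<in>U. inj (\<lambda>i. dphi \<phi> i u) \<and> independent (range (\<lambda>i. dphi \<phi> i u)))"

definition ind_metric ::
  "real \<Rightarrow> real^'m^'m \<Rightarrow> (real^'m \<Rightarrow> (real^'m) \<times> real) \<Rightarrow> 'm::finite \<Rightarrow> 'm \<Rightarrow> real^'m \<Rightarrow> real" where
  "ind_metric g r \<phi> i j u =
     (1/2) * hess2 (\<lambda>Rh. (FH g r Rh)^2) (\<phi> u) (dphi \<phi> i u) (dphi \<phi> j u)"

definition Gam1 :: "('m::finite \<Rightarrow> 'm \<Rightarrow> real^'m \<Rightarrow> real) \<Rightarrow> 'm \<Rightarrow> 'm \<Rightarrow> 'm \<Rightarrow> real^'m \<Rightarrow> real" where
  "Gam1 gm k i j u = (pd i (gm j k) u + pd j (gm i k) u - pd k (gm i j) u) / 2"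

definition ginv :: "('m::finite \<Rightarrow> 'm \<Rightarrow> real^'m \<Rightarrow> real) \<Rightarrow> real^'m \<Rightarrow> real^'m^'m" where
  "ginv gm u = matrix_inv (\<chi> i j. gm i j u)"

definition Gam2 :: "('m::finite \<Rightarrow> 'm \<Rightarrow> real^'m \<Rightarrow> real) \<Rightarrow> 'm \<Rightarrow> 'm \<Rightarrow> 'm \<Rightarrow> real^'m \<Rightarrow> real" where
  "Gam2 gm l i j u = (\<Sum>m\<in>UNIV. ginv gm u $ l $ m * Gam1 gm m i j u)"

text \<open>R^l_{ijk} = components of R(d_j,d_k)d_i, with R(X,Y) = [nabla_X,nabla_Y] - nabla_[X,Y].\<close>
definition Riem_up :: "('m::finite \<Rightarrow> 'm \<Rightarrow> real^'m \<Rightarrow> real) \<Rightarrow> 'm \<Rightarrow> 'm \<Rightarrow> 'm \<Rightarrow> 'm \<Rightarrow> real^'m \<Rightarrow> real" where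
  "Riem_up gm l i j k u =
     pd j (Gam2 gm l k i) u - pd k (Gam2 gm l j i) u
     + (\<Sum>s\<in>UNIV. Gam2 gm l j s u * Gam2 gm s k i u - Gam2 gm l k s u * Gam2 gm s j i u)"

definition Riem :: "('m::finite \<Rightarrow> 'm \<Rightarrow> real^'m \<Rightarrow> real) \<Rightarrow> 'm \<Rightarrow> 'm \<Rightarrow> 'm \<Rightarrow> 'm \<Rightarrow> real^'m \<Rightarrow> real" where
  "Riem gm l i j k u = (\<Sum>m\<in>UNIV. gm l m u * Riem_up gm m i j k u)"

end

theory Submission
  imports Defs
begin

text \<open>The map \<open>\<Psi>(R) = (R\<^sub>a / \<surd>B, A / (h \<surd>B))\<close> takes the region \<open>q > 0\<close> of the dual space
  into the sphere of radius \<open>1/h\<close> for the Euclidean structure \<open>r \<oplus> 1\<close>, because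
  \<open>B = A\<^sup>2 + h\<^sup>2 q\<^sup>2\<close>. On vectors tangent to the level set \<open>H = 1\<close>, the form
  \<open>\<onehalf> \<partial>\<^sup>2H\<^sup>2\<close> coincides with the pull-back of this Euclidean structure under \<open>d\<Psi>\<close>, and \<open>d\<Psi>\<close> is
  injective there. So \<open>\<Psi>\<close> composed with a chart of the co-Finsleroid indicatrix is a chart of a
  hypersurface of that sphere whose induced metric is the one of the theorem, and the Gauss
  equation for hypersurfaces of a sphere of squared radius \<open>c\<close>,
  \<open>R\<^sub>l\<^sub>i\<^sub>j\<^sub>k = (g\<^sub>l\<^sub>j g\<^sub>i\<^sub>k - g\<^sub>l\<^sub>k g\<^sub>i\<^sub>j) / c\<close>, gives the curvature \<open>h\<^sup>2 = 1 - g\<^sup>2/4\<close>.\<close>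

section \<open>Smooth functions in coordinates\<close>

lemma eventually_line_in_open:
  fixes w :: "'a::real_normed_vector"
  assumes "open U" "u \<in> U"
  shows "\<forall>\<^sub>F t in nhds 0. u + t *\<^sub>R w \<in> U"
proof -
  have "open ((\<lambda>t::real. u + t *\<^sub>R w) -` U)"
    using assms(1) by (intro continuous_open_vimage) (auto intro!: continuous_intros)
  then show ?thesis
    using eventually_nhds_in_open[of _ 0] assms(2) by fastforce
qed

lemma pd_eqI: "((\<lambda>t. f (u + t *\<^sub>R axis i 1)) has_real_derivative D) (at 0) \<Longrightarrow> pd i f u = D"
  unfolding pd_def by (rule DERIV_imp_deriv)

lemma pd_const [simp]: "pd i (\<lambda>v. c) u = 0"
  by (rule pd_eqI) simp

lemma pd_cong_open:
  assumes "open U" "u \<in> U" "\<And>v. v \<in> U \<Longrightarrow> f v = g v"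
  shows "pd i f u = pd i g u"
proof -
  have "\<forall>\<^sub>F t in nhds 0. f (u + t *\<^sub>R axis i 1) = g (u + t *\<^sub>R axis i 1)"
    using eventually_line_in_open[OF assms(1,2), of "axis i 1"]
    by (rule eventually_mono) (simp add: assms(3))
  then show ?thesis unfolding pd_def by (rule deriv_cong_ev) simp
qed

lemma pd_eq_0_if_constant_on:
  assumes "open U" "u \<in> U" "\<And>v. v \<in> U \<Longrightarrow> f v = c"
  shows "pd i f u = 0"
  using pd_cong_open[OF assms] by simp

lemma pds_append: "pds (is @ js) f = pds is (pds js f)"
  by (induction "is") auto

lemma smooth_fun_on_pd:
  assumes "smooth_fun_on U f"
  shows "smooth_fun_on U (pd i f)"
  unfolding smooth_fun_on_def
proof
  fix "is"
  have "pds is (pd i f) = pds (is @ [i]) f" by (simp add: pds_append)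
  then show "continuous_on U (pds is (pd i f)) \<and>
      (\<forall>j. \<forall>u\<in>U. (\<lambda>t. pds is (pd i f) (u + t *\<^sub>R axis j 1)) differentiable (at 0))"
    using assms unfolding smooth_fun_on_def by simp
qed

lemma smooth_fun_on_continuous:
  assumes "smooth_fun_on U f"
  shows "continuous_on U f"
proof -
  have "continuous_on U (pds [] f)" using assms unfolding smooth_fun_on_def by blast
  then show ?thesis by simp
qed

lemma smooth_fun_on_has_pd:
  assumes "smooth_fun_on U f" "u \<in> U"
  shows "((\<lambda>t. f (u + t *\<^sub>R axis i 1)) has_real_derivative pd i f u) (at 0)"
proof -
  have "(\<lambda>t. pds [] f (u + t *\<^sub>R axis i 1)) differentiable (at 0)"
    using assms unfolding smooth_fun_on_def by blast
  then show ?thesis unfolding pd_def by (simp add: DERIV_deriv_iff_real_differentiable)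
qed

text \<open>Closure properties of \<^const>\<open>smooth_fun_on\<close> are proved through this inductive class: all
  its members have line derivatives that lie in the class again, so it is closed under \<^const>\<open>pd\<close>
  and hence consists of smooth functions.\<close>
inductive smooth_closure :: "(real^'m::finite) set \<Rightarrow> (real^'m \<Rightarrow> real) \<Rightarrow> bool" for U where
  smooth: "smooth_fun_on U f \<Longrightarrow> smooth_closure U f"
| const: "smooth_closure U (\<lambda>u. c)"
| add: "smooth_closure U f \<Longrightarrow> smooth_closure U g \<Longrightarrow> smooth_closure U (\<lambda>u. f u + g u)"
| mult: "smooth_closure U f \<Longrightarrow> smooth_closure U g \<Longrightarrow> smooth_closure U (\<lambda>u. f u * g u)"
| inverse: "smooth_closure U f \<Longrightarrow> (\<And>u. u \<in> U \<Longrightarrow> f u \<noteq> 0) \<Longrightarrow>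
    smooth_closure U (\<lambda>u. inverse (f u))"
| sqrt: "smooth_closure U f \<Longrightarrow> (\<And>u. u \<in> U \<Longrightarrow> 0 < f u) \<Longrightarrow> smooth_closure U (\<lambda>u. sqrt (f u))"
| cong: "smooth_closure U f \<Longrightarrow> (\<And>u. u \<in> U \<Longrightarrow> g u = f u) \<Longrightarrow> smooth_closure U g"

lemma smooth_closure_minus: "smooth_closure U f \<Longrightarrow> smooth_closure U (\<lambda>u. - f u)"
  by (rule smooth_closure.cong[OF smooth_closure.mult[OF smooth_closure.const[of U "- 1"]]]) auto

definition closure_differentiable_on :: "(real^'m::finite) set \<Rightarrow> (real^'m \<Rightarrow> real) \<Rightarrow> bool" where
  "closure_differentiable_on U f \<longleftrightarrow> continuous_on U f \<and>
     (\<forall>i. \<exists>f'. smooth_closure U f' \<and>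
        (\<forall>u\<in>U. ((\<lambda>t. f (u + t *\<^sub>R axis i 1)) has_real_derivative f' u) (at 0)))"

lemma closure_differentiable_on_smooth:
  assumes "smooth_fun_on U f"
  shows "closure_differentiable_on U f"
  unfolding closure_differentiable_on_def
  using assms smooth_fun_on_continuous smooth_closure.smooth[OF smooth_fun_on_pd] smooth_fun_on_has_pd
  by blast

lemma closure_differentiable_on_const: "closure_differentiable_on U (\<lambda>u. c)"
  unfolding closure_differentiable_on_def by (auto intro!: exI[of _ "\<lambda>u. 0"] smooth_closure.const)

lemma closure_differentiable_on_add:
  assumes "closure_differentiable_on U f" "closure_differentiable_on U g"
  shows "closure_differentiable_on U (\<lambda>u. f u + g u)"
  unfolding closure_differentiable_on_def
proof (intro conjI allI)
  fix i
  obtain f' g' where "smooth_closure U f'" "smooth_closure U g'"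
    "\<forall>u\<in>U. ((\<lambda>t. f (u + t *\<^sub>R axis i 1)) has_real_derivative f' u) (at 0)"
    "\<forall>u\<in>U. ((\<lambda>t. g (u + t *\<^sub>R axis i 1)) has_real_derivative g' u) (at 0)"
    using assms unfolding closure_differentiable_on_def by blast
  then show "\<exists>h'. smooth_closure U h' \<and>
      (\<forall>u\<in>U. ((\<lambda>t. f (u + t *\<^sub>R axis i 1) + g (u + t *\<^sub>R axis i 1)) has_real_derivative h' u) (at 0))"
    by (intro exI[of _ "\<lambda>u. f' u + g' u"]) (auto intro: smooth_closure.add DERIV_add)
qed (use assms in \<open>auto simp: closure_differentiable_on_def intro: continuous_on_add\<close>)

lemma closure_differentiable_on_mult:
  assumes "smooth_closure U f" "smooth_closure U g"
    and "closure_differentiable_on U f" "closure_differentiable_on U g"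
  shows "closure_differentiable_on U (\<lambda>u. f u * g u)"
  unfolding closure_differentiable_on_def
proof (intro conjI allI)
  fix i
  obtain f' g' where "smooth_closure U f'" "smooth_closure U g'"
    "\<forall>u\<in>U. ((\<lambda>t. f (u + t *\<^sub>R axis i 1)) has_real_derivative f' u) (at 0)"
    "\<forall>u\<in>U. ((\<lambda>t. g (u + t *\<^sub>R axis i 1)) has_real_derivative g' u) (at 0)"
    using assms(3,4) unfolding closure_differentiable_on_def by blast
  then show "\<exists>h'. smooth_closure U h' \<and>
      (\<forall>u\<in>U. ((\<lambda>t. f (u + t *\<^sub>R axis i 1) * g (u + t *\<^sub>R axis i 1)) has_real_derivative h' u) (at 0))"
    using assms(1,2)
    by (intro exI[of _ "\<lambda>u. f' u * g u + f u * g' u"])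
       (auto intro!: smooth_closure.add smooth_closure.mult derivative_eq_intros)
qed (use assms in \<open>auto simp: closure_differentiable_on_def intro: continuous_on_mult\<close>)

lemma closure_differentiable_on_inverse:
  assumes f: "smooth_closure U f" "closure_differentiable_on U f" and nonzero: "\<And>u. u \<in> U \<Longrightarrow> f u \<noteq> 0"
  shows "closure_differentiable_on U (\<lambda>u. inverse (f u))"
  unfolding closure_differentiable_on_def
proof (intro conjI allI)
  fix i
  obtain f' where f': "smooth_closure U f'"
    "\<forall>u\<in>U. ((\<lambda>t. f (u + t *\<^sub>R axis i 1)) has_real_derivative f' u) (at 0)"
    using f(2) unfolding closure_differentiable_on_def by blast
  show "\<exists>h'. smooth_closure U h' \<and>
      (\<forall>u\<in>U. ((\<lambda>t. inverse (f (u + t *\<^sub>R axis i 1))) has_real_derivative h' u) (at 0))"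
  proof (intro exI[of _ "\<lambda>u. - (f' u * (inverse (f u) * inverse (f u)))"] conjI ballI)
    show "smooth_closure U (\<lambda>u. - (f' u * (inverse (f u) * inverse (f u))))"
      using f'(1) f(1) nonzero by (intro smooth_closure_minus smooth_closure.mult smooth_closure.inverse)
  next
    fix u assume "u \<in> U"
    then show "((\<lambda>t. inverse (f (u + t *\<^sub>R axis i 1))) has_real_derivative
        - (f' u * (inverse (f u) * inverse (f u)))) (at 0)"
      using DERIV_inverse_fun[of "\<lambda>t. f (u + t *\<^sub>R axis i 1)" "f' u" 0] f' nonzero
      by (simp add: power2_eq_square)
  qed
qed (use f nonzero in \<open>auto simp: closure_differentiable_on_def intro: continuous_on_inverse\<close>)

lemma closure_differentiable_on_sqrt:
  assumes f: "smooth_closure U f" "closure_differentiable_on U f" and pos: "\<And>u. u \<in> U \<Longrightarrow> 0 < f u"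
  shows "closure_differentiable_on U (\<lambda>u. sqrt (f u))"
  unfolding closure_differentiable_on_def
proof (intro conjI allI)
  fix i
  obtain f' where f': "smooth_closure U f'"
    "\<forall>u\<in>U. ((\<lambda>t. f (u + t *\<^sub>R axis i 1)) has_real_derivative f' u) (at 0)"
    using f(2) unfolding closure_differentiable_on_def by blast
  show "\<exists>h'. smooth_closure U h' \<and>
      (\<forall>u\<in>U. ((\<lambda>t. sqrt (f (u + t *\<^sub>R axis i 1))) has_real_derivative h' u) (at 0))"
  proof (intro exI[of _ "\<lambda>u. inverse (sqrt (f u)) / 2 * f' u"] conjI ballI)
    show "smooth_closure U (\<lambda>u. inverse (sqrt (f u)) / 2 * f' u)"
      using f'(1) f(1) pos unfolding divide_inverse
      by (intro smooth_closure.mult smooth_closure.inverse smooth_closure.sqrt smooth_closure.const)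
         (auto dest!: pos)
  next
    fix u assume "u \<in> U"
    then have "0 < f (u + 0 *\<^sub>R axis i 1)"
      and "((\<lambda>t. f (u + t *\<^sub>R axis i 1)) has_real_derivative f' u) (at 0)"
      using f'(2) pos by auto
    from DERIV_chain2[OF DERIV_real_sqrt[OF this(1)] this(2)]
    show "((\<lambda>t. sqrt (f (u + t *\<^sub>R axis i 1))) has_real_derivative inverse (sqrt (f u)) / 2 * f' u) (at 0)"
      by simp
  qed
qed (use f in \<open>auto simp: closure_differentiable_on_def intro: continuous_on_real_sqrt\<close>)

lemma closure_differentiable_on_cong:
  assumes U: "open U" and f: "closure_differentiable_on U f" and eq: "\<And>u. u \<in> U \<Longrightarrow> g u = f u"
  shows "closure_differentiable_on U g"
  unfolding closure_differentiable_on_def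
proof (intro conjI allI)
  fix i
  obtain f' where f': "smooth_closure U f'"
    "\<forall>u\<in>U. ((\<lambda>t. f (u + t *\<^sub>R axis i 1)) has_real_derivative f' u) (at 0)"
    using f unfolding closure_differentiable_on_def by blast
  have "((\<lambda>t. g (u + t *\<^sub>R axis i 1)) has_real_derivative f' u) (at 0)" if "u \<in> U" for u
  proof -
    have "\<forall>\<^sub>F t in nhds 0. g (u + t *\<^sub>R axis i 1) = f (u + t *\<^sub>R axis i 1)"
      using eventually_line_in_open[OF U that, of "axis i 1"] by (rule eventually_mono) (simp add: eq)
    from DERIV_cong_ev[OF refl this refl] show ?thesis using f'(2) that by simp
  qed
  then show "\<exists>g'. smooth_closure U g' \<and>
      (\<forall>u\<in>U. ((\<lambda>t. g (u + t *\<^sub>R axis i 1)) has_real_derivative g' u) (at 0))"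
    using f'(1) by blast
qed (use f eq continuous_on_cong in \<open>auto simp: closure_differentiable_on_def\<close>)

lemma smooth_closure_imp_closure_differentiable_on:
  assumes "open U" "smooth_closure U f"
  shows "closure_differentiable_on U f"
  using assms(2)
proof (induction rule: smooth_closure.induct)
  case (cong f g)
  show ?case by (rule closure_differentiable_on_cong[OF assms(1) cong.IH cong.hyps(2)])
qed (simp_all add: closure_differentiable_on_smooth closure_differentiable_on_const
  closure_differentiable_on_add closure_differentiable_on_mult closure_differentiable_on_inverse
  closure_differentiable_on_sqrt)

lemma smooth_closure_pd:
  assumes "open U" "smooth_closure U f"
  shows "smooth_closure U (pd i f)"
proof -
  obtain f' where "smooth_closure U f'"
    "\<forall>u\<in>U. ((\<lambda>t. f (u + t *\<^sub>R axis i 1)) has_real_derivative f' u) (at 0)"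
    using smooth_closure_imp_closure_differentiable_on[OF assms]
    unfolding closure_differentiable_on_def by blast
  then show ?thesis by (auto intro: smooth_closure.cong pd_eqI)
qed

lemma smooth_closure_iff_smooth_fun_on:
  assumes "open U"
  shows "smooth_closure U f \<longleftrightarrow> smooth_fun_on U f"
proof
  assume "smooth_closure U f"
  then have pds: "smooth_closure U (pds is f)" for "is"
    by (induction "is") (simp_all add: smooth_closure_pd[OF assms])
  show "smooth_fun_on U f"
    using smooth_closure_imp_closure_differentiable_on[OF assms pds]
    unfolding smooth_fun_on_def real_differentiable_def closure_differentiable_on_def by blast
qed (rule smooth_closure.smooth)

context
  fixes U :: "(real^'m::finite) set"
  assumes open_U: "open U"
begin

lemma smooth_fun_on_const: "smooth_fun_on U (\<lambda>u. c)"
  using smooth_closure.const smooth_closure_iff_smooth_fun_on[OF open_U] by blast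

lemma smooth_fun_on_add:
  "smooth_fun_on U f \<Longrightarrow> smooth_fun_on U g \<Longrightarrow> smooth_fun_on U (\<lambda>u. f u + g u)"
  using smooth_closure.add smooth_closure_iff_smooth_fun_on[OF open_U] by blast

lemma smooth_fun_on_mult:
  "smooth_fun_on U f \<Longrightarrow> smooth_fun_on U g \<Longrightarrow> smooth_fun_on U (\<lambda>u. f u * g u)"
  using smooth_closure.mult smooth_closure_iff_smooth_fun_on[OF open_U] by blast

lemma smooth_fun_on_inverse:
  "smooth_fun_on U f \<Longrightarrow> (\<And>u. u \<in> U \<Longrightarrow> f u \<noteq> 0) \<Longrightarrow> smooth_fun_on U (\<lambda>u. inverse (f u))"
  using smooth_closure.inverse smooth_closure_iff_smooth_fun_on[OF open_U] by blast

lemma smooth_fun_on_sqrt: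
  "smooth_fun_on U f \<Longrightarrow> (\<And>u. u \<in> U \<Longrightarrow> 0 < f u) \<Longrightarrow> smooth_fun_on U (\<lambda>u. sqrt (f u))"
  using smooth_closure.sqrt smooth_closure_iff_smooth_fun_on[OF open_U] by blast

lemma smooth_fun_on_cong:
  "smooth_fun_on U f \<Longrightarrow> (\<And>u. u \<in> U \<Longrightarrow> g u = f u) \<Longrightarrow> smooth_fun_on U g"
  using smooth_closure.cong smooth_closure_iff_smooth_fun_on[OF open_U] by blast

lemma smooth_fun_on_minus: "smooth_fun_on U f \<Longrightarrow> smooth_fun_on U (\<lambda>u. - f u)"
  using smooth_closure_minus smooth_closure_iff_smooth_fun_on[OF open_U] by blast

lemma smooth_fun_on_diff:
  "smooth_fun_on U f \<Longrightarrow> smooth_fun_on U g \<Longrightarrow> smooth_fun_on U (\<lambda>u. f u - g u)"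
  using smooth_fun_on_add[OF _ smooth_fun_on_minus] by simp

lemma smooth_fun_on_divide:
  "smooth_fun_on U f \<Longrightarrow> smooth_fun_on U g \<Longrightarrow> (\<And>u. u \<in> U \<Longrightarrow> g u \<noteq> 0) \<Longrightarrow>
    smooth_fun_on U (\<lambda>u. f u / g u)"
  using smooth_fun_on_mult[OF _ smooth_fun_on_inverse] by (simp add: divide_inverse)

lemma smooth_fun_on_power: "smooth_fun_on U f \<Longrightarrow> smooth_fun_on U (\<lambda>u. f u ^ n)"
  by (induction n) (simp_all add: smooth_fun_on_const smooth_fun_on_mult)

lemma smooth_fun_on_sum:
  "finite S \<Longrightarrow> (\<And>s. s \<in> S \<Longrightarrow> smooth_fun_on U (f s)) \<Longrightarrow> smooth_fun_on U (\<lambda>u. \<Sum>s\<in>S. f s u)"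
  by (induction S rule: finite_induct) (simp_all add: smooth_fun_on_const smooth_fun_on_add)

lemma smooth_fun_on_prod:
  "finite S \<Longrightarrow> (\<And>s. s \<in> S \<Longrightarrow> smooth_fun_on U (f s)) \<Longrightarrow> smooth_fun_on U (\<lambda>u. \<Prod>s\<in>S. f s u)"
  by (induction S rule: finite_induct) (simp_all add: smooth_fun_on_const smooth_fun_on_mult)

end

lemma pd_diff:
  assumes "smooth_fun_on U f" "smooth_fun_on U g" "u \<in> U"
  shows "pd i (\<lambda>v. f v - g v) u = pd i f u - pd i g u"
  using assms by (intro pd_eqI DERIV_diff smooth_fun_on_has_pd)

lemma pd_cmult:
  assumes "smooth_fun_on U f" "u \<in> U"
  shows "pd i (\<lambda>v. c * f v) u = c * pd i f u"
  using assms by (intro pd_eqI DERIV_cmult smooth_fun_on_has_pd)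

lemma pd_mult:
  assumes "smooth_fun_on U f" "smooth_fun_on U g" "u \<in> U"
  shows "pd i (\<lambda>v. f v * g v) u = pd i f u * g u + f u * pd i g u"
  using DERIV_mult[OF smooth_fun_on_has_pd[OF assms(1,3)] smooth_fun_on_has_pd[OF assms(2,3)]]
  by (intro pd_eqI) (simp add: mult.commute)

lemma pd_sum:
  assumes "finite S" "\<And>s. s \<in> S \<Longrightarrow> smooth_fun_on U (f s)" "u \<in> U"
  shows "pd i (\<lambda>v. \<Sum>s\<in>S. f s v) u = (\<Sum>s\<in>S. pd i (f s) u)"
  using assms by (intro pd_eqI DERIV_sum smooth_fun_on_has_pd)

section \<open>Symmetry of second partial derivatives\<close>

lemma smooth_fun_on_has_pd_at:
  assumes "smooth_fun_on U f" "u + s *\<^sub>R axis i 1 \<in> U"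
  shows "((\<lambda>s. f (u + s *\<^sub>R axis i 1)) has_real_derivative pd i f (u + s *\<^sub>R axis i 1)) (at s)"
proof -
  have "((\<lambda>t. f ((u + s *\<^sub>R axis i 1) + t *\<^sub>R axis i 1)) has_real_derivative
      pd i f (u + s *\<^sub>R axis i 1)) (at 0)"
    by (rule smooth_fun_on_has_pd[OF assms])
  moreover have "(\<lambda>t. f ((u + s *\<^sub>R axis i 1) + t *\<^sub>R axis i 1)) = (\<lambda>t. f (u + (t + s) *\<^sub>R axis i 1))"
    by (simp add: algebra_simps scaleR_add_left)
  ultimately show ?thesis using DERIV_shift[of _ _ 0 s] by simp
qed

lemma second_difference_mean_value:
  assumes f: "smooth_fun_on U f" and "0 < \<delta>"
    and square: "\<And>s t. 0 \<le> s \<Longrightarrow> s \<le> \<delta> \<Longrightarrow> 0 \<le> t \<Longrightarrow> t \<le> \<delta> \<Longrightarrow>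
      u + s *\<^sub>R axis i 1 + t *\<^sub>R axis j 1 \<in> U"
  obtains s t where "0 < s" "s < \<delta>" "0 < t" "t < \<delta>"
    "f (u + \<delta> *\<^sub>R axis i 1 + \<delta> *\<^sub>R axis j 1) - f (u + \<delta> *\<^sub>R axis i 1)
       - f (u + \<delta> *\<^sub>R axis j 1) + f u
     = \<delta> * \<delta> * pd j (pd i f) (u + s *\<^sub>R axis i 1 + t *\<^sub>R axis j 1)"
proof -
  define p where "p s t = u + s *\<^sub>R axis i 1 + t *\<^sub>R axis j 1" for s t
  have p_in: "p s t \<in> U" if "0 \<le> s" "s \<le> \<delta>" "0 \<le> t" "t \<le> \<delta>" for s t
    unfolding p_def using square that .
  have "p s t = (u + t *\<^sub>R axis j 1) + s *\<^sub>R axis i 1" for s t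
    unfolding p_def by (simp add: algebra_simps)
  then have "((\<lambda>s. f (p s t)) has_real_derivative pd i f (p s t)) (at s)" if "p s t \<in> U" for s t
    using smooth_fun_on_has_pd_at[OF f] that by simp
  then have "((\<lambda>s. f (p s \<delta>) - f (p s 0)) has_real_derivative pd i f (p x \<delta>) - pd i f (p x 0)) (at x)"
    if "0 \<le> x" "x \<le> \<delta>" for x
    using that \<open>0 < \<delta>\<close> p_in by (intro DERIV_diff) auto
  from MVT2[OF \<open>0 < \<delta>\<close> this] obtain s where s: "0 < s" "s < \<delta>"
    "f (p \<delta> \<delta>) - f (p \<delta> 0) - (f (p 0 \<delta>) - f (p 0 0)) = \<delta> * (pd i f (p s \<delta>) - pd i f (p s 0))"
    by auto
  have "((\<lambda>t. pd i f (p s t)) has_real_derivative pd j (pd i f) (p s t)) (at t)"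
    if "0 \<le> t" "t \<le> \<delta>" for t
    using smooth_fun_on_has_pd_at[OF smooth_fun_on_pd[OF f], of "u + s *\<^sub>R axis i 1" t j i]
      p_in[of s t] s that unfolding p_def by simp
  from MVT2[OF \<open>0 < \<delta>\<close> this] obtain t where t: "0 < t" "t < \<delta>"
    "pd i f (p s \<delta>) - pd i f (p s 0) = \<delta> * pd j (pd i f) (p s t)"
    by auto
  show ?thesis
    using that[OF s(1,2) t(1,2)] s(3) t(3) unfolding p_def by simp
qed

lemma dist_add_axes_le:
  fixes u :: "real^'m::finite"
  assumes "0 \<le> s" "0 \<le> t"
  shows "dist (u + s *\<^sub>R axis k 1 + t *\<^sub>R axis l 1) u \<le> s + t"
proof -
  have "dist (u + s *\<^sub>R axis k 1 + t *\<^sub>R axis l 1) u \<le> norm (s *\<^sub>R axis k (1::real)) + norm (t *\<^sub>R axis l (1::real))"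
    unfolding dist_norm by (simp add: norm_triangle_ineq del: norm_scaleR)
  then show ?thesis using assms by simp
qed

lemma mixed_pds_meet_nearby:
  assumes f: "smooth_fun_on U f" and "0 < \<delta>"
    and square: "\<And>s t k l. 0 \<le> s \<Longrightarrow> s \<le> \<delta> \<Longrightarrow> 0 \<le> t \<Longrightarrow> t \<le> \<delta> \<Longrightarrow>
      u + s *\<^sub>R axis k 1 + t *\<^sub>R axis l 1 \<in> U"
  obtains p p' where "dist p u \<le> 2 * \<delta>" "dist p' u \<le> 2 * \<delta>" "pd j (pd i f) p = pd i (pd j f) p'"
proof -
  obtain s1 t1 where st1: "0 < s1" "s1 < \<delta>" "0 < t1" "t1 < \<delta>"
    "f (u + \<delta> *\<^sub>R axis i 1 + \<delta> *\<^sub>R axis j 1) - f (u + \<delta> *\<^sub>R axis i 1) - f (u + \<delta> *\<^sub>R axis j 1) + f u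
     = \<delta> * \<delta> * pd j (pd i f) (u + s1 *\<^sub>R axis i 1 + t1 *\<^sub>R axis j 1)"
    by (rule second_difference_mean_value[OF f \<open>0 < \<delta>\<close> square])
  obtain s2 t2 where st2: "0 < s2" "s2 < \<delta>" "0 < t2" "t2 < \<delta>"
    "f (u + \<delta> *\<^sub>R axis j 1 + \<delta> *\<^sub>R axis i 1) - f (u + \<delta> *\<^sub>R axis j 1) - f (u + \<delta> *\<^sub>R axis i 1) + f u
     = \<delta> * \<delta> * pd i (pd j f) (u + s2 *\<^sub>R axis j 1 + t2 *\<^sub>R axis i 1)"
    by (rule second_difference_mean_value[OF f \<open>0 < \<delta>\<close> square])
  have "pd j (pd i f) (u + s1 *\<^sub>R axis i 1 + t1 *\<^sub>R axis j 1) = pd i (pd j f) (u + s2 *\<^sub>R axis j 1 + t2 *\<^sub>R axis i 1)"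
    using st1(5) st2(5) \<open>0 < \<delta>\<close> by (simp add: algebra_simps)
  moreover have "dist (u + s1 *\<^sub>R axis i 1 + t1 *\<^sub>R axis j 1) u \<le> 2 * \<delta>"
    and "dist (u + s2 *\<^sub>R axis j 1 + t2 *\<^sub>R axis i 1) u \<le> 2 * \<delta>"
    using dist_add_axes_le[of s1 t1 u i j] dist_add_axes_le[of s2 t2 u j i] st1 st2 by simp_all
  ultimately show ?thesis using that by blast
qed

theorem pd_commute:
  assumes U: "open U" and f: "smooth_fun_on U f" and u: "u \<in> U"
  shows "pd i (pd j f) u = pd j (pd i f) u"
proof (rule ccontr)
  let ?a = "pd i (pd j f)" and ?b = "pd j (pd i f)"
  assume "?a u \<noteq> ?b u"
  then have d: "0 < \<bar>?a u - ?b u\<bar> / 2" by simp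
  have "isCont ?a u" "isCont ?b u"
    using U u smooth_fun_on_continuous[OF smooth_fun_on_pd[OF smooth_fun_on_pd[OF f]]]
    by (simp_all add: continuous_on_eq_continuous_at)
  then obtain e1 e2 where e1: "0 < e1" "\<And>x. dist x u < e1 \<Longrightarrow> dist (?a x) (?a u) < \<bar>?a u - ?b u\<bar> / 2"
    and e2: "0 < e2" "\<And>x. dist x u < e2 \<Longrightarrow> dist (?b x) (?b u) < \<bar>?a u - ?b u\<bar> / 2"
    unfolding continuous_at_eps_delta using d by metis
  obtain e0 where e0: "0 < e0" "ball u e0 \<subseteq> U" using U u open_contains_ball by blast
  define \<delta> where "\<delta> = min e0 (min e1 e2) / 3"
  have \<delta>: "0 < \<delta>" "2 * \<delta> < e0" "2 * \<delta> < e1" "2 * \<delta> < e2"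
    using e0 e1 e2 unfolding \<delta>_def by auto
  have "u + s *\<^sub>R axis k 1 + t *\<^sub>R axis l 1 \<in> U" if "0 \<le> s" "s \<le> \<delta>" "0 \<le> t" "t \<le> \<delta>" for s t k l
    using dist_add_axes_le[of s t u k l] that \<delta> e0 by (auto simp: dist_commute)
  then obtain p p' where p: "dist p u \<le> 2 * \<delta>" "dist p' u \<le> 2 * \<delta>" "?b p = ?a p'"
    using mixed_pds_meet_nearby[OF f \<delta>(1)] by blast
  have "dist (?b p) (?b u) < \<bar>?a u - ?b u\<bar> / 2" by (rule e2(2)) (use p(1) \<delta> in linarith)
  moreover have "dist (?a p') (?a u) < \<bar>?a u - ?b u\<bar> / 2" by (rule e1(2)) (use p(2) \<delta> in linarith)
  ultimately show False using p(3) unfolding dist_real_def by argo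
qed

section \<open>The Euclidean structure of the dual space\<close>

definition rform :: "real^'m^'m \<Rightarrow> real^'m::finite \<Rightarrow> real^'m \<Rightarrow> real" where
  "rform r X Y = (\<Sum>a\<in>UNIV. \<Sum>b\<in>UNIV. r$a$b * X$a * Y$b)"

definition rprod :: "real^'m^'m \<Rightarrow> (real^'m::finite) \<times> real \<Rightarrow> (real^'m) \<times> real \<Rightarrow> real" where
  "rprod r x y = rform r (fst x) (fst y) + snd x * snd y"

lemma qhat_eq_sqrt_rform: "qhat r X = sqrt (rform r X X)"
  unfolding qhat_def rform_def ..

lemma rform_self_eq_qhat_sq: "0 < qhat r X \<Longrightarrow> rform r X X = (qhat r X)^2"
  unfolding qhat_eq_sqrt_rform by simp

lemma rform_eq_inner: "rform r X Y = X \<bullet> (r *v Y)"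
  unfolding rform_def inner_vec_def matrix_vector_mult_def
  by (simp add: sum_distrib_left mult.commute mult.left_commute)

lemma bilinear_rform: "bilinear (rform r)"
  unfolding bilinear_def rform_eq_inner
  by (auto intro!: linearI simp: inner_add_left inner_add_right matrix_vector_right_distrib
      matrix_vector_mult_scaleR)

lemma bilinear_rprod: "bilinear (rprod r)"
  using bilinear_rform[of r] unfolding bilinear_def rprod_def linear_iff
  by (simp add: algebra_simps)

lemmas rform_linear = bilinear_rform[THEN bilinear_ladd] bilinear_rform[THEN bilinear_radd]
  bilinear_rform[THEN bilinear_lsub] bilinear_rform[THEN bilinear_rsub]
  bilinear_rform[THEN bilinear_lmul] bilinear_rform[THEN bilinear_rmul]
  bilinear_rform[THEN bilinear_lzero] bilinear_rform[THEN bilinear_rzero]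

lemmas rprod_linear = bilinear_rprod[THEN bilinear_ladd] bilinear_rprod[THEN bilinear_radd]
  bilinear_rprod[THEN bilinear_lsub] bilinear_rprod[THEN bilinear_rsub]
  bilinear_rprod[THEN bilinear_lmul] bilinear_rprod[THEN bilinear_rmul]
  bilinear_rprod[THEN bilinear_lzero] bilinear_rprod[THEN bilinear_rzero]

lemma rprod_sum_left: "rprod r (\<Sum>l\<in>S. x l) z = (\<Sum>l\<in>S. rprod r (x l) z)"
  by (induction S rule: infinite_finite_induct) (simp_all add: rprod_linear)

lemma rprod_sum_right: "rprod r z (\<Sum>l\<in>S. x l) = (\<Sum>l\<in>S. rprod r z (x l))"
  by (induction S rule: infinite_finite_induct) (simp_all add: rprod_linear)

lemma rform_commute:
  assumes "transpose r = r"
  shows "rform r X Y = rform r Y X"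
proof -
  have "r$a$b = r$b$a" for a b
    using assms unfolding transpose_def by (metis vec_lambda_beta)
  then show ?thesis
    unfolding rform_def by (subst sum.swap) (simp add: mult.commute mult.left_commute)
qed

lemma rprod_commute: "transpose r = r \<Longrightarrow> rprod r x y = rprod r y x"
  unfolding rprod_def by (simp add: rform_commute mult.commute)

lemma rprod_self_pos:
  assumes pos: "\<forall>X. X \<noteq> 0 \<longrightarrow> 0 < X \<bullet> (r *v X)" and "z \<noteq> 0"
  shows "0 < rprod r z z"
proof (cases "fst z = 0")
  case True
  then have "snd z \<noteq> 0" using assms(2) by (simp add: prod_eq_iff)
  then show ?thesis
    using True unfolding rprod_def by (auto simp: rform_linear zero_less_mult_iff linorder_neq_iff)
next
  case False
  then show ?thesis
    using pos unfolding rprod_def rform_eq_inner by (simp add: add_pos_nonneg)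
qed

lemma has_real_derivative_rform:
  assumes "\<And>a. ((\<lambda>t. X t $ a) has_real_derivative X' $ a) (at t0)"
    and "\<And>a. ((\<lambda>t. Y t $ a) has_real_derivative Y' $ a) (at t0)"
  shows "((\<lambda>t. rform r (X t) (Y t)) has_real_derivative rform r X' (Y t0) + rform r (X t0) Y') (at t0)"
proof -
  have "((\<lambda>t. rform r (X t) (Y t)) has_real_derivative
      (\<Sum>a\<in>UNIV. \<Sum>b\<in>UNIV. r$a$b * X' $ a * Y t0 $ b + r$a$b * X t0 $ a * Y' $ b)) (at t0)"
    unfolding rform_def
    by (intro DERIV_sum) (auto intro!: derivative_eq_intros assms simp: algebra_simps)
  then show ?thesis by (simp add: rform_def sum.distrib)
qed

lemma has_real_derivative_rprod:
  assumes "\<And>a. ((\<lambda>t. fst (x t) $ a) has_real_derivative fst x' $ a) (at t0)"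
    and "((\<lambda>t. snd (x t)) has_real_derivative snd x') (at t0)"
    and "\<And>a. ((\<lambda>t. fst (y t) $ a) has_real_derivative fst y' $ a) (at t0)"
    and "((\<lambda>t. snd (y t)) has_real_derivative snd y') (at t0)"
  shows "((\<lambda>t. rprod r (x t) (y t)) has_real_derivative rprod r x' (y t0) + rprod r (x t0) y') (at t0)"
  unfolding rprod_def
  using DERIV_add[OF has_real_derivative_rform[OF assms(1,3)] DERIV_mult[OF assms(2,4)]]
  by (simp add: algebra_simps)

lemma det_gram_nonzero:
  fixes e :: "'m::finite \<Rightarrow> (real^'n::finite) \<times> real"
  assumes pos: "\<forall>X. X \<noteq> 0 \<longrightarrow> 0 < X \<bullet> (r *v X)"
    and independent: "\<And>b. (\<Sum>j\<in>UNIV. b $ j *\<^sub>R e j) = 0 \<Longrightarrow> b = 0"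
  shows "det (\<chi> i j. rprod r (e i) (e j)) \<noteq> 0"
proof -
  define M where "M = (\<chi> i j. rprod r (e i) (e j))"
  have "inj ((*v) M)"
    unfolding linear_injective_0[OF matrix_vector_mul_linear]
  proof (intro allI impI)
    fix b assume Mb: "M *v b = 0"
    define S where "S = (\<Sum>j\<in>UNIV. b $ j *\<^sub>R e j)"
    have "rprod r S S = (\<Sum>j\<in>UNIV. \<Sum>i\<in>UNIV. b $ i * (b $ j * rprod r (e i) (e j)))"
      unfolding S_def by (simp add: rprod_sum_left rprod_sum_right rprod_linear sum_distrib_left mult_ac)
    also have "\<dots> = (\<Sum>i\<in>UNIV. \<Sum>j\<in>UNIV. b $ i * (b $ j * rprod r (e i) (e j)))"
      by (rule sum.swap)
    also have "\<dots> = (\<Sum>i\<in>UNIV. b $ i * (M *v b) $ i)"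
      unfolding M_def matrix_vector_mult_def by (simp add: sum_distrib_left mult_ac)
    finally have "rprod r S S = 0" using Mb by simp
    then have "S = 0" using rprod_self_pos[OF pos] by (metis less_irrefl)
    then show "b = 0" using independent unfolding S_def by blast
  qed
  then show ?thesis
    using det_nz_iff_inj[OF matrix_vector_mul_linear, of M]
    unfolding M_def matrix_of_matrix_vector_mul by simp
qed

lemma independent_coeffs_eq_0:
  fixes e :: "'m::finite \<Rightarrow> 'v::real_vector"
  assumes inj: "inj e" and independent: "independent (range e)"
    and sum: "(\<Sum>j\<in>UNIV. b j *\<^sub>R e j) = 0"
  shows "b j = 0"
proof -
  define u where "u z = b (inv e z)" for z
  have "(\<Sum>z\<in>range e. u z *\<^sub>R z) = (\<Sum>j\<in>UNIV. b j *\<^sub>R e j)"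
    by (rule sum.reindex_cong[OF inj refl]) (simp add: u_def inv_f_f[OF inj])
  then have zero: "(\<Sum>z\<in>range e. u z *\<^sub>R z) = 0" using sum by simp
  have combinations: "\<forall>S\<subseteq>range e. finite S \<longrightarrow> (\<forall>u. (\<Sum>v\<in>S. u v *\<^sub>R v) = 0 \<longrightarrow> (\<forall>v\<in>S. u v = 0))"
    using independent unfolding independent_explicit_finite_subsets .
  have "finite (range e)" by simp
  from combinations[rule_format, OF subset_refl this] zero have "\<forall>z\<in>range e. u z = 0" by blast
  then have "u (e j) = 0" by blast
  then show ?thesis unfolding u_def inv_f_f[OF inj] .
qed

section \<open>Hypersurfaces of a round sphere\<close>

definition smooth_map_on :: "(real^'m::finite) set \<Rightarrow> (real^'m \<Rightarrow> (real^'m) \<times> real) \<Rightarrow> bool" where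
  "smooth_map_on U F \<longleftrightarrow> (\<forall>a. smooth_fun_on U (\<lambda>u. fst (F u) $ a)) \<and> smooth_fun_on U (\<lambda>u. snd (F u))"

lemma dphi_nth [simp]: "fst (dphi F i u) $ a = pd i (\<lambda>v. fst (F v) $ a) u"
  unfolding dphi_def by simp

lemma snd_dphi [simp]: "snd (dphi F i u) = pd i (\<lambda>v. snd (F v)) u"
  unfolding dphi_def by simp

lemma dphi_const [simp]: "dphi (\<lambda>v. w) i u = 0"
  by (simp add: prod_eq_iff vec_eq_iff)

lemma smooth_map_on_dphi: "smooth_map_on U F \<Longrightarrow> smooth_map_on U (dphi F i)"
  unfolding smooth_map_on_def by (simp add: smooth_fun_on_pd)

lemma smooth_map_on_const: "open U \<Longrightarrow> smooth_map_on U (\<lambda>v. w)"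
  unfolding smooth_map_on_def by (simp add: smooth_fun_on_const)

lemma smooth_map_on_has_pd:
  assumes "smooth_map_on U F" "u \<in> U"
  shows "((\<lambda>t. fst (F (u + t *\<^sub>R axis i 1)) $ a) has_real_derivative fst (dphi F i u) $ a) (at 0)"
    and "((\<lambda>t. snd (F (u + t *\<^sub>R axis i 1))) has_real_derivative snd (dphi F i u)) (at 0)"
  using assms smooth_fun_on_has_pd[of U "\<lambda>v. fst (F v) $ a" u i]
    smooth_fun_on_has_pd[of U "\<lambda>v. snd (F v)" u i]
  unfolding smooth_map_on_def by auto

lemma smooth_fun_on_rprod:
  assumes "open U" "smooth_map_on U F" "smooth_map_on U G"
  shows "smooth_fun_on U (\<lambda>v. rprod r (F v) (G v))"
  using assms unfolding smooth_map_on_def rprod_def rform_def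
  by (intro smooth_fun_on_add smooth_fun_on_sum smooth_fun_on_mult smooth_fun_on_const) auto

lemma pd_rprod:
  assumes "smooth_map_on U F" "smooth_map_on U G" "u \<in> U"
  shows "pd i (\<lambda>v. rprod r (F v) (G v)) u = rprod r (dphi F i u) (G u) + rprod r (F u) (dphi G i u)"
  using has_real_derivative_rprod[OF smooth_map_on_has_pd[OF assms(1,3)] smooth_map_on_has_pd[OF assms(2,3)]]
  by (intro pd_eqI) simp

lemma dphi_commute:
  assumes "open U" "smooth_map_on U F" "u \<in> U"
  shows "dphi (dphi F j) i u = dphi (dphi F i) j u"
  using assms pd_commute[OF assms(1) _ assms(3)] unfolding smooth_map_on_def
  by (simp add: dphi_def vec_eq_iff)

lemma matrix_inv_mult:
  fixes A :: "real^'n::finite^'n"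
  assumes "det A \<noteq> 0"
  shows "A ** matrix_inv A = mat 1" and "matrix_inv A ** A = mat 1"
proof -
  obtain B where "A ** B = mat 1 \<and> B ** A = mat 1"
    using assms invertible_det_nz unfolding invertible_def by blast
  then have "A ** matrix_inv A = mat 1 \<and> matrix_inv A ** A = mat 1"
    unfolding matrix_inv_def by (rule someI)
  then show "A ** matrix_inv A = mat 1" "matrix_inv A ** A = mat 1" by auto
qed

lemma matrix_inv_nth_cramer:
  fixes A :: "real^'n::finite^'n"
  assumes "det A \<noteq> 0"
  shows "matrix_inv A $ k $ l = det (\<chi> i j. if j = k then axis l 1 $ i else A$i$j) / det A"
proof -
  have "A *v (matrix_inv A *v axis l 1) = axis l 1"
    by (simp add: matrix_vector_mul_assoc matrix_inv_mult[OF assms])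
  then have "matrix_inv A *v axis l 1 = (\<chi> k. det (\<chi> i j. if j = k then axis l 1 $ i else A$i$j) / det A)"
    using cramer[OF assms] by blast
  moreover have "(matrix_inv A *v axis l 1) $ k = matrix_inv A $ k $ l"
    by (simp add: matrix_vector_mult_basis column_def)
  ultimately show ?thesis by simp
qed

lemma smooth_fun_on_det:
  assumes "open U" "\<And>i j. smooth_fun_on U (\<lambda>v. M v $ i $ j)"
  shows "smooth_fun_on U (\<lambda>v. det (M v :: real^'n::finite^'n))"
  unfolding det_def using assms
  by (intro smooth_fun_on_sum smooth_fun_on_mult smooth_fun_on_const smooth_fun_on_prod
      finite_permutations) auto

lemma smooth_fun_on_matrix_inv:
  assumes U: "open U" and M: "\<And>i j. smooth_fun_on U (\<lambda>v. M v $ i $ j)"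
    and det: "\<And>v. v \<in> U \<Longrightarrow> det (M v :: real^'n::finite^'n) \<noteq> 0"
  shows "smooth_fun_on U (\<lambda>v. matrix_inv (M v) $ k $ l)"
proof (rule smooth_fun_on_cong[OF U])
  have "smooth_fun_on U (\<lambda>v. (\<chi> i j. if j = k then axis l 1 $ i else M v $ i $ j) $ i $ j)" for i j
    by (cases "j = k") (simp_all add: smooth_fun_on_const[OF U] M)
  then show "smooth_fun_on U (\<lambda>v. det (\<chi> i j. if j = k then axis l 1 $ i else M v $ i $ j) / det (M v))"
    by (intro smooth_fun_on_divide[OF U] smooth_fun_on_det[OF U] M det)
qed (simp add: matrix_inv_nth_cramer det)

text \<open>\<open>F\<close> is a chart of a hypersurface of the sphere \<open>rprod r x x = c\<close>; the metric \<open>gm\<close> need only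
  agree with the induced one on \<open>U\<close>.\<close>
locale sphere_chart =
  fixes U :: "(real^'m::finite) set" and r :: "real^'m^'m"
    and F :: "real^'m \<Rightarrow> (real^'m) \<times> real" and c :: real
    and gm :: "'m \<Rightarrow> 'm \<Rightarrow> real^'m \<Rightarrow> real"
  assumes open_U: "open U"
    and r_sym: "transpose r = r" and r_pos: "\<forall>X. X \<noteq> 0 \<longrightarrow> 0 < X \<bullet> (r *v X)"
    and smooth_F: "smooth_map_on U F"
    and rprod_F_F: "\<And>v. v \<in> U \<Longrightarrow> rprod r (F v) (F v) = c" and c_pos: "0 < c"
    and frame_independent: "\<And>v b. v \<in> U \<Longrightarrow> (\<Sum>j\<in>UNIV. b $ j *\<^sub>R dphi F j v) = 0 \<Longrightarrow> b = 0"
    and gm_eq: "\<And>v i j. v \<in> U \<Longrightarrow> gm i j v = rprod r (dphi F i v) (dphi F j v)"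
begin

lemma smooth_dphi: "smooth_map_on U (dphi F i)" "smooth_map_on U (dphi (dphi F i) j)"
  using smooth_F by (simp_all add: smooth_map_on_dphi)

lemma gm_commute: "v \<in> U \<Longrightarrow> gm i j v = gm j i v"
  using gm_eq rprod_commute[OF r_sym] by metis

lemma smooth_gm: "smooth_fun_on U (gm i j)"
  by (rule smooth_fun_on_cong[OF open_U smooth_fun_on_rprod[OF open_U smooth_dphi(1) smooth_dphi(1)]])
     (simp add: gm_eq)

lemma pd_gm:
  assumes "v \<in> U"
  shows "pd k (gm i j) v = rprod r (dphi (dphi F i) k v) (dphi F j v) + rprod r (dphi F i v) (dphi (dphi F j) k v)"
  using pd_cong_open[OF open_U assms gm_eq] pd_rprod[OF smooth_dphi(1) smooth_dphi(1) assms] by simp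

lemma rprod_dphi_F:
  assumes "v \<in> U"
  shows "rprod r (dphi F i v) (F v) = 0"
proof -
  have "pd i (\<lambda>w. rprod r (F w) (F w)) v = 0"
    using rprod_F_F by (intro pd_eq_0_if_constant_on[OF open_U assms])
  then show ?thesis
    using pd_rprod[OF smooth_F smooth_F assms, of i r] rprod_commute[OF r_sym] by simp
qed

lemma rprod_ddphi_F:
  assumes "v \<in> U"
  shows "rprod r (dphi (dphi F j) i v) (F v) = - gm i j v"
proof -
  have "pd i (\<lambda>w. rprod r (dphi F j w) (F w)) v = 0"
    using rprod_dphi_F by (intro pd_eq_0_if_constant_on[OF open_U assms])
  then show ?thesis
    using pd_rprod[OF smooth_dphi(1) smooth_F assms, of i r j] gm_eq[OF assms] gm_commute[OF assms]
    by simp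
qed

lemma Gam1_eq:
  assumes "v \<in> U"
  shows "Gam1 gm k i j v = rprod r (dphi (dphi F j) i v) (dphi F k v)"
  unfolding Gam1_def pd_gm[OF assms] dphi_commute[OF open_U smooth_F assms, of i j]
    dphi_commute[OF open_U smooth_F assms, of i k] dphi_commute[OF open_U smooth_F assms, of j k]
  using rprod_commute[OF r_sym] by simp

lemma det_gm_nonzero:
  assumes "v \<in> U"
  shows "det (\<chi> i j. gm i j v) \<noteq> 0"
  using det_gram_nonzero[OF r_pos frame_independent[OF assms]] by (simp add: gm_eq[OF assms])

lemma smooth_Gam2: "smooth_fun_on U (Gam2 gm l i j)"
proof -
  have "smooth_fun_on U (\<lambda>v. ginv gm v $ a $ b)" for a b
    unfolding ginv_def using det_gm_nonzero
    by (intro smooth_fun_on_matrix_inv[OF open_U]) (simp_all add: smooth_gm)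
  moreover have "smooth_fun_on U (Gam1 gm m i j)" for m
    unfolding Gam1_def
    by (intro smooth_fun_on_divide[OF open_U] smooth_fun_on_diff[OF open_U] smooth_fun_on_add[OF open_U]
        smooth_fun_on_const[OF open_U] smooth_fun_on_pd smooth_gm) simp
  ultimately show ?thesis
    unfolding Gam2_def[abs_def] by (intro smooth_fun_on_sum[OF open_U] smooth_fun_on_mult[OF open_U]) auto
qed

lemma Gam2_lower:
  assumes v: "v \<in> U"
  shows "(\<Sum>l\<in>UNIV. Gam2 gm l i j v * gm l m v) = Gam1 gm m i j v"
proof -
  have inv: "(\<Sum>l\<in>UNIV. gm m l v * ginv gm v $ l $ n) = (if m = n then 1 else 0)" for n
    using arg_cong[OF matrix_inv_mult(1)[OF det_gm_nonzero[OF v]], of "\<lambda>A. A $ m $ n"]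
    unfolding ginv_def by (simp add: matrix_matrix_mult_def mat_def)
  have "(\<Sum>l\<in>UNIV. Gam2 gm l i j v * gm l m v)
      = (\<Sum>n\<in>UNIV. Gam1 gm n i j v * (\<Sum>l\<in>UNIV. gm m l v * ginv gm v $ l $ n))"
    unfolding Gam2_def sum_distrib_left sum_distrib_right
    by (subst sum.swap) (simp add: gm_commute[OF v, of _ m] mult_ac)
  also have "\<dots> = Gam1 gm m i j v"
    unfolding inv by (simp add: if_distrib cong: if_cong)
  finally show ?thesis .
qed

lemma orthogonal_to_frame_eq_0:
  assumes v: "v \<in> U" and TF: "rprod r T (F v) = 0" and TdF: "\<And>m. rprod r T (dphi F m v) = 0"
  shows "T = 0"
proof -
  define L where "L x = (\<Sum>l\<in>UNIV. fst x $ l *\<^sub>R dphi F l v) + snd x *\<^sub>R F v" for x :: "(real^'m) \<times> real"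
  have lin: "linear L"
    unfolding L_def
    by (rule linearI) (simp_all add: scaleR_add_left sum.distrib scaleR_sum_right algebra_simps)
  have "inj L"
    unfolding linear_injective_0[OF lin]
  proof (intro allI impI)
    fix x assume "L x = 0"
    moreover have "rprod r (L x) (F v) = snd x * c"
      unfolding L_def using rprod_dphi_F[OF v] rprod_F_F[OF v]
      by (simp add: rprod_linear rprod_sum_left)
    ultimately have "snd x = 0" using c_pos by (simp add: rprod_linear)
    with \<open>L x = 0\<close> have "fst x = 0"
      using frame_independent[OF v, of "fst x"] unfolding L_def by simp
    with \<open>snd x = 0\<close> show "x = 0" by (simp add: prod_eq_iff)
  qed
  then obtain x where "T = L x"
    using linear_injective_imp_surjective[OF lin] surjD by blast
  then have "rprod r T T = rprod r T (L x)" by simp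
  also have "\<dots> = (\<Sum>l\<in>UNIV. fst x $ l * rprod r T (dphi F l v)) + snd x * rprod r T (F v)"
    unfolding L_def by (simp add: rprod_linear rprod_sum_right)
  finally have "rprod r T T = 0" using TF TdF by simp
  then show "T = 0" using rprod_self_pos[OF r_pos] by (metis less_irrefl)
qed

lemma gauss_formula:
  assumes v: "v \<in> U"
  shows "dphi (dphi F i) k v = (\<Sum>l\<in>UNIV. Gam2 gm l k i v *\<^sub>R dphi F l v) - (gm k i v / c) *\<^sub>R F v"
proof -
  have "dphi (dphi F i) k v - ((\<Sum>l\<in>UNIV. Gam2 gm l k i v *\<^sub>R dphi F l v) - (gm k i v / c) *\<^sub>R F v) = 0"
  proof (rule orthogonal_to_frame_eq_0[OF v])
    show "rprod r (dphi (dphi F i) k v - ((\<Sum>l\<in>UNIV. Gam2 gm l k i v *\<^sub>R dphi F l v)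
        - (gm k i v / c) *\<^sub>R F v)) (F v) = 0"
      using rprod_ddphi_F[OF v, of i k] rprod_dphi_F[OF v] rprod_F_F[OF v] c_pos
      by (simp add: rprod_linear rprod_sum_left)
    show "rprod r (dphi (dphi F i) k v - ((\<Sum>l\<in>UNIV. Gam2 gm l k i v *\<^sub>R dphi F l v)
        - (gm k i v / c) *\<^sub>R F v)) (dphi F m v) = 0" for m
    proof -
      have "rprod r (F v) (dphi F m v) = 0"
        using rprod_dphi_F[OF v] rprod_commute[OF r_sym] by metis
      then show ?thesis
        by (simp add: rprod_linear rprod_sum_left gm_eq[OF v, symmetric] Gam1_eq[OF v, symmetric]
            Gam2_lower[OF v])
    qed
  qed
  then show ?thesis by simp
qed

lemma rprod_F_dphi: "v \<in> U \<Longrightarrow> rprod r (F v) (dphi F m v) = 0"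
  using rprod_dphi_F rprod_commute[OF r_sym] by metis

lemma rprod_dddphi:
  assumes u: "u \<in> U"
  shows "rprod r (dphi (dphi (dphi F i) k) j u) (dphi F m u) =
     (\<Sum>l\<in>UNIV. pd j (Gam2 gm l k i) u * gm l m u
        + Gam2 gm l k i u * (\<Sum>s\<in>UNIV. Gam2 gm s j l u * gm s m u))
     - 1 / c * (gm k i u * gm j m u)"
proof -
  define w where "w = dphi F m u"
  have w: "smooth_map_on U (\<lambda>v. w)" by (rule smooth_map_on_const[OF open_U])
  have dF_w: "smooth_fun_on U (\<lambda>v. rprod r (dphi F l v) w)" for l
    by (rule smooth_fun_on_rprod[OF open_U smooth_dphi(1) w])
  have F_w: "smooth_fun_on U (\<lambda>v. rprod r (F v) w)"
    by (rule smooth_fun_on_rprod[OF open_U smooth_F w])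
  have pd_dF_w: "pd j (\<lambda>v. rprod r (dphi F l v) w) u = (\<Sum>s\<in>UNIV. Gam2 gm s j l u * gm s m u)" for l
    using pd_rprod[OF smooth_dphi(1) w u, of j r l] rprod_F_dphi[OF u]
    by (simp add: w_def gauss_formula[OF u] rprod_linear rprod_sum_left gm_eq[OF u, symmetric])
  have "rprod r (dphi (dphi (dphi F i) k) j u) w = pd j (\<lambda>v. rprod r (dphi (dphi F i) k v) w) u"
    using pd_rprod[OF smooth_dphi(2) w u] by (simp add: rprod_linear)
  also have "\<dots> = pd j (\<lambda>v. (\<Sum>l\<in>UNIV. Gam2 gm l k i v * rprod r (dphi F l v) w)
      - 1 / c * (gm k i v * rprod r (F v) w)) u"
    by (rule pd_cong_open[OF open_U u]) (simp add: gauss_formula rprod_linear rprod_sum_left)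
  also have "\<dots> = (\<Sum>l\<in>UNIV. pd j (Gam2 gm l k i) u * rprod r (dphi F l u) w
        + Gam2 gm l k i u * pd j (\<lambda>v. rprod r (dphi F l v) w) u)
      - 1 / c * (pd j (gm k i) u * rprod r (F u) w + gm k i u * pd j (\<lambda>v. rprod r (F v) w) u)"
  proof -
    have sum: "smooth_fun_on U (\<lambda>v. \<Sum>l\<in>UNIV. Gam2 gm l k i v * rprod r (dphi F l v) w)"
      by (intro smooth_fun_on_sum[OF open_U] smooth_fun_on_mult[OF open_U] smooth_Gam2 dF_w) simp
    have terms: "smooth_fun_on U (\<lambda>v. Gam2 gm l k i v * rprod r (dphi F l v) w)" for l
      by (rule smooth_fun_on_mult[OF open_U smooth_Gam2 dF_w])
    have prod: "smooth_fun_on U (\<lambda>v. gm k i v * rprod r (F v) w)"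
      by (rule smooth_fun_on_mult[OF open_U smooth_gm F_w])
    show ?thesis
      unfolding pd_diff[OF sum smooth_fun_on_mult[OF open_U smooth_fun_on_const[OF open_U] prod] u]
        pd_cmult[OF prod u] pd_mult[OF smooth_gm F_w u]
        pd_sum[OF finite terms u]
        pd_mult[OF smooth_Gam2 dF_w u] ..
  qed
  also have "\<dots> = (\<Sum>l\<in>UNIV. pd j (Gam2 gm l k i) u * gm l m u
        + Gam2 gm l k i u * (\<Sum>s\<in>UNIV. Gam2 gm s j l u * gm s m u))
      - 1 / c * (gm k i u * gm j m u)"
    using pd_rprod[OF smooth_F w u, of j r] rprod_F_dphi[OF u]
    by (simp add: pd_dF_w[unfolded w_def] w_def rprod_linear gm_eq[OF u, symmetric])
  finally show ?thesis unfolding w_def .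
qed

theorem gauss_equation:
  assumes u: "u \<in> U"
  shows "Riem gm l i j k u = 1 / c * (gm l j u * gm i k u - gm l k u * gm i j u)"
proof -
  have swap: "(\<Sum>l\<in>UNIV. Gam2 gm l k i u * (\<Sum>s\<in>UNIV. Gam2 gm s j l u * gm s m u)) =
      (\<Sum>l\<in>UNIV. \<Sum>s\<in>UNIV. Gam2 gm l j s u * Gam2 gm s k i u * gm l m u)" for i j k m
  proof -
    have "(\<Sum>l\<in>UNIV. Gam2 gm l k i u * (\<Sum>s\<in>UNIV. Gam2 gm s j l u * gm s m u)) =
        (\<Sum>l\<in>UNIV. \<Sum>s\<in>UNIV. Gam2 gm l k i u * Gam2 gm s j l u * gm s m u)"
      by (simp add: sum_distrib_left mult.assoc)
    also have "\<dots> = (\<Sum>s\<in>UNIV. \<Sum>l\<in>UNIV. Gam2 gm l k i u * Gam2 gm s j l u * gm s m u)"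
      by (rule sum.swap)
    finally show ?thesis by (simp add: mult_ac)
  qed
  have third: "rprod r (dphi (dphi (dphi F i) k) j u) (dphi F l u) =
      (\<Sum>m\<in>UNIV. pd j (Gam2 gm m k i) u * gm m l u)
      + (\<Sum>m\<in>UNIV. \<Sum>s\<in>UNIV. Gam2 gm m j s u * Gam2 gm s k i u * gm m l u)
      - 1 / c * (gm k i u * gm j l u)" for i j k
    unfolding rprod_dddphi[OF u] sum.distrib swap ..
  have "(\<Sum>m\<in>UNIV. Riem_up gm m i j k u * gm m l u) =
      (\<Sum>m\<in>UNIV. pd j (Gam2 gm m k i) u * gm m l u) - (\<Sum>m\<in>UNIV. pd k (Gam2 gm m j i) u * gm m l u)
      + (\<Sum>m\<in>UNIV. \<Sum>s\<in>UNIV. Gam2 gm m j s u * Gam2 gm s k i u * gm m l u)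
      - (\<Sum>m\<in>UNIV. \<Sum>s\<in>UNIV. Gam2 gm m k s u * Gam2 gm s j i u * gm m l u)"
    unfolding Riem_up_def
    by (simp add: algebra_simps sum.distrib sum_subtractf sum_distrib_right sum_distrib_left)
  also have "\<dots> = 1 / c * (gm k i u * gm j l u - gm j i u * gm k l u)"
  proof -
    have "dphi (dphi (dphi F i) k) j u = dphi (dphi (dphi F i) j) k u"
      using dphi_commute[OF open_U smooth_dphi(1) u] by metis
    then have "rprod r (dphi (dphi (dphi F i) k) j u) (dphi F l u) =
        rprod r (dphi (dphi (dphi F i) j) k u) (dphi F l u)" by simp
    then show ?thesis
      using third[of i j k] third[of i k j] unfolding right_diff_distrib by linarith
  qed
  finally have "(\<Sum>m\<in>UNIV. Riem_up gm m i j k u * gm m l u) =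
      1 / c * (gm k i u * gm j l u - gm j i u * gm k l u)" .
  then show ?thesis
    unfolding Riem_def using gm_commute[OF u] by (simp add: mult.commute algebra_simps)
qed

end

section \<open>The co-Finsleroid Hamiltonian\<close>

lemma square_less_4: "-2 < g \<Longrightarrow> g < 2 \<Longrightarrow> (g::real)^2 < 4"
  using abs_square_less_1[of "g/2"] by (simp add: power_divide abs_less_iff)

lemma hh_pos: "-2 < g \<Longrightarrow> g < 2 \<Longrightarrow> 0 < hh g"
  unfolding hh_def using square_less_4[of g] by simp

lemma hh_squared: "-2 < g \<Longrightarrow> g < 2 \<Longrightarrow> (hh g)^2 = 1 - g^2/4"
  unfolding hh_def using square_less_4[of g] by simp

lemma Bhat_eq_sum_squares:
  assumes "-2 < g" "g < 2"
  shows "Bhat g r x = (Ahat g r x)^2 + (hh g)^2 * (qhat r (fst x))^2"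
  unfolding Bhat_def Ahat_def hh_squared[OF assms] by (simp add: power2_eq_square field_simps)

lemma Bhat_pos: "-2 < g \<Longrightarrow> g < 2 \<Longrightarrow> 0 < qhat r (fst x) \<Longrightarrow> 0 < Bhat g r x"
  using Bhat_eq_sum_squares[of g r x] hh_pos[of g] by (simp add: add_nonneg_pos)

definition Jhat_sq :: "real \<Rightarrow> real^'m^'m \<Rightarrow> (real^'m::finite) \<times> real \<Rightarrow> real" where
  "Jhat_sq g r x = exp (- GG g * arctan (Ahat g r x / (hh g * qhat r (fst x))))"

lemma FH_sq_eq:
  assumes "-2 < g" "g < 2" "0 < qhat r (fst x)"
  shows "(FH g r x)^2 = Bhat g r x * Jhat_sq g r x"
proof -
  have "(exp (- (1/2) * GG g * Phihat g r x))^2 = exp (- GG g * Phihat g r x)"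
    by (simp add: power2_eq_square exp_add[symmetric])
  then show ?thesis
    using Bhat_pos[OF assms]
    unfolding FH_def Jhat_def Jhat_sq_def Phihat_def by (simp add: power_mult_distrib assms(3))
qed

definition dqhat :: "real^'m^'m \<Rightarrow> (real^'m::finite) \<times> real \<Rightarrow> (real^'m) \<times> real \<Rightarrow> real" where
  "dqhat r x y = rform r (fst x) (fst y) / qhat r (fst x)"

definition tangent_form :: "real \<Rightarrow> real^'m^'m \<Rightarrow> (real^'m::finite) \<times> real \<Rightarrow> (real^'m) \<times> real \<Rightarrow> real" where
  "tangent_form g r x w = (snd x - g * qhat r (fst x)) * snd w + rform r (fst x) (fst w)"

lemma DERIV_qhat_curve:
  assumes sym: "transpose r = r"
    and dR: "\<And>a. ((\<lambda>t. fst (c t) $ a) has_real_derivative fst d $ a) (at t0)"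
    and q: "0 < qhat r (fst (c t0))"
  shows "((\<lambda>t. qhat r (fst (c t))) has_real_derivative dqhat r (c t0) d) (at t0)"
proof -
  have pos: "0 < rform r (fst (c t0)) (fst (c t0))"
    using q unfolding qhat_eq_sqrt_rform by simp
  have "rform r (fst d) (fst (c t0)) = rform r (fst (c t0)) (fst d)"
    by (rule rform_commute[OF sym])
  then have "((\<lambda>t. rform r (fst (c t)) (fst (c t))) has_real_derivative 2 * rform r (fst (c t0)) (fst d)) (at t0)"
    using has_real_derivative_rform[OF dR dR, of r] by simp
  from DERIV_chain2[OF DERIV_real_sqrt[OF pos] this]
  have "((\<lambda>t. sqrt (rform r (fst (c t)) (fst (c t)))) has_real_derivative
      inverse (sqrt (rform r (fst (c t0)) (fst (c t0)))) / 2 * (2 * rform r (fst (c t0)) (fst d))) (at t0)" .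
  then show ?thesis
    unfolding dqhat_def qhat_eq_sqrt_rform by (rule DERIV_cong) (simp add: inverse_eq_divide)
qed

lemma DERIV_arctan_ratio:
  fixes q z :: "real \<Rightarrow> real"
  assumes qd: "(q has_real_derivative q') (at t0)" and zd: "(z has_real_derivative z') (at t0)"
    and q0: "0 < q t0" and h: "0 < h" "h^2 = 1 - g^2/4"
  shows "((\<lambda>t. arctan ((z t - g * q t / 2) / (h * q t))) has_real_derivative
     h * ((z' - g * q' / 2) * q t0 - (z t0 - g * q t0 / 2) * q') / (z t0 ^ 2 - g * q t0 * z t0 + q t0 ^ 2))
     (at t0)"
proof -
  define Q Z where "Q = q t0" and "Z = z t0"
  define u B where "u = (Z - g * Q / 2) / (h * Q)" and "B = Z^2 - g * Q * Z + Q^2"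
  have Q: "0 < Q" using q0 Q_def by simp
  have sum_squares: "B = (Z - g * Q / 2)^2 + h^2 * Q^2"
    unfolding B_def h(2) by (simp add: power2_eq_square algebra_simps)
  then have B: "0 < B" using Q h(1) by (simp add: add_nonneg_pos)
  have "((\<lambda>t. (z t - g * q t / 2) / (h * q t)) has_real_derivative
      ((z' - g * q' / 2) * (h * Q) - (Z - g * Q / 2) * (h * q')) / (h * Q)^2) (at t0)"
    using qd zd Q h(1) unfolding Q_def Z_def
    by (auto intro!: derivative_eq_intros simp: power2_eq_square field_simps)
  from DERIV_chain2[OF DERIV_arctan this]
  have "((\<lambda>t. arctan ((z t - g * q t / 2) / (h * q t))) has_real_derivative
      inverse (1 + u^2) * (((z' - g * q' / 2) * (h * Q) - (Z - g * Q / 2) * (h * q')) / (h * Q)^2)) (at t0)"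
    unfolding u_def Q_def Z_def .
  moreover have "1 + u^2 = B / (h^2 * Q^2)"
    unfolding u_def sum_squares using Q h(1) by (simp add: field_simps power2_eq_square)
  ultimately have "((\<lambda>t. arctan ((z t - g * q t / 2) / (h * q t))) has_real_derivative
      h * ((z' - g * q' / 2) * Q - (Z - g * Q / 2) * q') / B) (at t0)"
    using Q h(1) B by (elim DERIV_cong) (simp add: field_simps power2_eq_square)
  then show ?thesis unfolding B_def Q_def Z_def .
qed

lemma DERIV_quadratic_exp_arctan:
  fixes q z :: "real \<Rightarrow> real"
  assumes qd: "(q has_real_derivative q') (at t0)" and zd: "(z has_real_derivative z') (at t0)"
    and q0: "0 < q t0" and h: "0 < h" "h^2 = 1 - g^2/4"
  shows "((\<lambda>t. (z t ^ 2 - g * q t * z t + q t ^ 2) * exp (- (g / h) * arctan ((z t - g * q t / 2) / (h * q t))))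
     has_real_derivative
       2 * exp (- (g / h) * arctan ((z t0 - g * q t0 / 2) / (h * q t0))) * ((z t0 - g * q t0) * z' + q t0 * q'))
     (at t0)"
proof -
  define Q Z where "Q = q t0" and "Z = z t0"
  define B E where "B = Z^2 - g * Q * Z + Q^2"
    and "E = exp (- (g / h) * arctan ((Z - g * Q / 2) / (h * Q)))"
  have "B = (Z - g * Q / 2)^2 + h^2 * Q^2"
    unfolding B_def h(2) by (simp add: power2_eq_square algebra_simps)
  then have B: "0 < B" using q0 h(1) unfolding Q_def by (simp add: add_nonneg_pos)
  \<comment> \<open>the arctangent contributes a factor \<open>1 / B\<close>, which cancels the quadratic prefactor\<close>
  have exp: "((\<lambda>t. exp (- (g / h) * arctan ((z t - g * q t / 2) / (h * q t)))) has_real_derivative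
      E * (- (g / h) * (h * ((z' - g * q' / 2) * Q - (Z - g * Q / 2) * q') / B))) (at t0)"
    using DERIV_chain2[OF DERIV_exp DERIV_cmult[OF DERIV_arctan_ratio[OF qd zd q0 h], of "- (g / h)"]]
    unfolding E_def B_def Q_def Z_def .
  have quadratic: "((\<lambda>t. z t ^ 2 - g * q t * z t + q t ^ 2) has_real_derivative
      2 * Z * z' - g * (q' * Z + Q * z') + 2 * Q * q') (at t0)"
    using qd zd unfolding Q_def Z_def
    by (auto intro!: derivative_eq_intros simp: algebra_simps power2_eq_square)
  have "z t0 ^ 2 - g * q t0 * z t0 + q t0 ^ 2 = B"
    and "exp (- (g / h) * arctan ((z t0 - g * q t0 / 2) / (h * q t0))) = E"
    unfolding B_def E_def Q_def Z_def by simp_all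
  then have "((\<lambda>t. (z t ^ 2 - g * q t * z t + q t ^ 2) * exp (- (g / h) * arctan ((z t - g * q t / 2) / (h * q t))))
      has_real_derivative 2 * E * ((Z - g * Q) * z' + Q * q')) (at t0)"
    using B h(1) by (intro DERIV_cong[OF DERIV_mult[OF quadratic exp]]) (simp add: field_simps)
  then show ?thesis unfolding E_def Q_def Z_def .
qed

lemma DERIV_Bhat_Jhat_sq_curve:
  assumes g: "-2 < g" "g < 2" and sym: "transpose r = r"
    and dR: "\<And>a. ((\<lambda>t. fst (c t) $ a) has_real_derivative fst d $ a) (at t0)"
    and dZ: "((\<lambda>t. snd (c t)) has_real_derivative snd d) (at t0)"
    and q: "0 < qhat r (fst (c t0))"
  shows "((\<lambda>t. Bhat g r (c t) * Jhat_sq g r (c t)) has_real_derivative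
      2 * Jhat_sq g r (c t0) * tangent_form g r (c t0) d) (at t0)"
proof -
  have "((\<lambda>t. Bhat g r (c t) * Jhat_sq g r (c t)) has_real_derivative
      2 * Jhat_sq g r (c t0) * ((snd (c t0) - g * qhat r (fst (c t0))) * snd d
        + qhat r (fst (c t0)) * dqhat r (c t0) d)) (at t0)"
    using DERIV_quadratic_exp_arctan[OF DERIV_qhat_curve[OF sym dR q] dZ q hh_pos[OF g] hh_squared[OF g]]
    unfolding Bhat_def Jhat_sq_def Ahat_def GG_def .
  moreover have "qhat r (fst (c t0)) * dqhat r (c t0) d = rform r (fst (c t0)) (fst d)"
    using q by (simp add: dqhat_def)
  ultimately show ?thesis unfolding tangent_form_def by (simp only:)
qed

lemma open_qhat_pos: "open {x::(real^'m::finite) \<times> real. 0 < qhat r (fst x)}"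
proof -
  have "continuous_on UNIV (\<lambda>x::(real^'m) \<times> real. qhat r (fst x))"
    unfolding qhat_def by (intro continuous_intros)
  then show ?thesis by (simp add: open_Collect_less continuous_on_const)
qed

lemma line_has_derivative:
  "((\<lambda>s. fst (x + s *\<^sub>R y) $ a) has_real_derivative fst y $ a) (at t)"
  "((\<lambda>s. snd (x + s *\<^sub>R y)) has_real_derivative snd y) (at t)"
  by (simp_all, auto intro!: derivative_eq_intros)

lemma DERIV_mult_vanishing:
  assumes g: "(g has_real_derivative D) (at x)" and "g x = 0" and f: "isCont f x"
  shows "((\<lambda>t. f t * g t) has_real_derivative f x * D) (at x)"
proof -
  obtain d where d: "\<forall>t. g t - g x = d t * (t - x)" "isCont d x" "d x = D"
    using g CARAT_DERIV by blast
  show ?thesis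
    unfolding CARAT_DERIV
  proof (intro exI[of _ "\<lambda>t. f t * d t"] conjI allI)
    show "f t * g t - f x * g x = f t * d t * (t - x)" for t
      using d(1) \<open>g x = 0\<close> by (simp add: mult.assoc)
  qed (use f d in \<open>simp_all add: isCont_mult\<close>)
qed

lemma deriv_FH_sq_line:
  assumes g: "-2 < g" "g < 2" and sym: "transpose r = r" and q: "0 < qhat r (fst z)"
  shows "deriv (\<lambda>t. (FH g r (z + t *\<^sub>R w))^2) 0 = 2 * Jhat_sq g r z * tangent_form g r z w"
proof -
  have BJ: "((\<lambda>t. Bhat g r (z + t *\<^sub>R w) * Jhat_sq g r (z + t *\<^sub>R w)) has_real_derivative
      2 * Jhat_sq g r z * tangent_form g r z w) (at 0)"
    using DERIV_Bhat_Jhat_sq_curve[OF g sym line_has_derivative(1)[of z w _ 0]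
        line_has_derivative(2)[of z w 0]] q by simp
  have "z \<in> {x. 0 < qhat r (fst x)}" using q by simp
  from eventually_line_in_open[OF open_qhat_pos this, of w]
  have ev: "\<forall>\<^sub>F t in nhds 0. (FH g r (z + t *\<^sub>R w))^2 = Bhat g r (z + t *\<^sub>R w) * Jhat_sq g r (z + t *\<^sub>R w)"
    by (rule eventually_mono) (metis FH_sq_eq[OF g] mem_Collect_eq)
  show ?thesis
    by (rule DERIV_imp_deriv) (subst DERIV_cong_ev[OF refl ev refl], rule BJ)
qed

lemma DERIV_tangent_form_line:
  assumes sym: "transpose r = r" and q: "0 < qhat r (fst x)"
  shows "((\<lambda>s. tangent_form g r (x + s *\<^sub>R y) w) has_real_derivative
    (snd y - g * dqhat r x y) * snd w + rform r (fst y) (fst w)) (at 0)"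
proof -
  have "((\<lambda>s. qhat r (fst (x + s *\<^sub>R y))) has_real_derivative dqhat r x y) (at 0)"
    using DERIV_qhat_curve[OF sym line_has_derivative(1)[of x y _ 0]] q by simp
  then have "((\<lambda>s. snd (x + s *\<^sub>R y) - g * qhat r (fst (x + s *\<^sub>R y))) has_real_derivative
      snd y - g * dqhat r x y) (at 0)"
    by (intro DERIV_diff line_has_derivative(2) DERIV_cmult)
  moreover have "((\<lambda>s. fst w $ a) has_real_derivative 0 $ a) (at 0)" for a by simp
  from has_real_derivative_rform[OF line_has_derivative(1)[of x y _ 0] this, of r]
  have "((\<lambda>s. rform r (fst (x + s *\<^sub>R y)) (fst w)) has_real_derivative rform r (fst y) (fst w)) (at 0)"
    by (simp add: rform_linear)
  ultimately show ?thesis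
    unfolding tangent_form_def by (rule DERIV_add[OF DERIV_cmult_right])
qed

lemma isCont_Jhat_sq_line:
  assumes g: "-2 < g" "g < 2" and sym: "transpose r = r" and q: "0 < qhat r (fst x)"
  shows "isCont (\<lambda>s. Jhat_sq g r (x + s *\<^sub>R y)) 0"
proof -
  have "((\<lambda>s. qhat r (fst (x + s *\<^sub>R y))) has_real_derivative dqhat r x y) (at 0)"
    using DERIV_qhat_curve[OF sym line_has_derivative(1)[of x y _ 0]] q by simp
  from DERIV_isCont[OF this] show ?thesis
    using q hh_pos[OF g] unfolding Jhat_sq_def Ahat_def by (intro continuous_intros) auto
qed

text \<open>Only the Hessian in tangential directions \<open>w\<close> is needed: there the derivative of the factor
  \<^const>\<open>Jhat_sq\<close> drops out, since it multiplies \<open>tangent_form g r x w = 0\<close>.\<close>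
lemma hess2_FH_sq_tangent:
  assumes g: "-2 < g" "g < 2" and sym: "transpose r = r" and q: "0 < qhat r (fst x)"
    and w: "tangent_form g r x w = 0"
  shows "hess2 (\<lambda>Rh. (FH g r Rh)^2) x y w =
    2 * Jhat_sq g r x * ((snd y - g * dqhat r x y) * snd w + rform r (fst y) (fst w))"
proof -
  have "x \<in> {x. 0 < qhat r (fst x)}" using q by simp
  from eventually_line_in_open[OF open_qhat_pos this, of y]
  have "\<forall>\<^sub>F s in nhds 0. deriv (\<lambda>t. (FH g r (x + s *\<^sub>R y + t *\<^sub>R w))^2) 0
      = 2 * Jhat_sq g r (x + s *\<^sub>R y) * tangent_form g r (x + s *\<^sub>R y) w"
    by (rule eventually_mono) (metis deriv_FH_sq_line[OF g sym] mem_Collect_eq)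
  then have "hess2 (\<lambda>Rh. (FH g r Rh)^2) x y w
      = deriv (\<lambda>s. 2 * Jhat_sq g r (x + s *\<^sub>R y) * tangent_form g r (x + s *\<^sub>R y) w) 0"
    unfolding hess2_def by (rule deriv_cong_ev) simp
  also have "\<dots> = 2 * Jhat_sq g r x * ((snd y - g * dqhat r x y) * snd w + rform r (fst y) (fst w))"
    using DERIV_mult_vanishing[OF DERIV_tangent_form_line[OF sym q] _ isCont_mult[OF continuous_const
        isCont_Jhat_sq_line[OF g sym q]]] w
    by (intro DERIV_imp_deriv) simp
  finally show ?thesis .
qed

section \<open>The map onto the sphere\<close>

definition sphere_map :: "real \<Rightarrow> real^'m^'m \<Rightarrow> (real^'m::finite) \<times> real \<Rightarrow> (real^'m) \<times> real" where
  "sphere_map g r x = ((1 / sqrt (Bhat g r x)) *\<^sub>R fst x, Ahat g r x / (hh g * sqrt (Bhat g r x)))"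

definition dBhat :: "real \<Rightarrow> real^'m^'m \<Rightarrow> (real^'m::finite) \<times> real \<Rightarrow> (real^'m) \<times> real \<Rightarrow> real" where
  "dBhat g r x y = 2 * snd x * snd y - g * (dqhat r x y * snd x + qhat r (fst x) * snd y)
     + 2 * qhat r (fst x) * dqhat r x y"

definition sphere_map_deriv ::
  "real \<Rightarrow> real^'m^'m \<Rightarrow> (real^'m::finite) \<times> real \<Rightarrow> (real^'m) \<times> real \<Rightarrow> (real^'m) \<times> real" where
  "sphere_map_deriv g r x y =
     ((1 / sqrt (Bhat g r x)) *\<^sub>R (fst y - (dBhat g r x y / (2 * Bhat g r x)) *\<^sub>R fst x),
      (snd y - g * dqhat r x y / 2 - dBhat g r x y / (2 * Bhat g r x) * Ahat g r x)
        / (hh g * sqrt (Bhat g r x)))"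

lemma rprod_sphere_map_self:
  assumes g: "-2 < g" "g < 2" and q: "0 < qhat r (fst x)"
  shows "rprod r (sphere_map g r x) (sphere_map g r x) = 1 / (hh g)^2"
proof -
  have B: "0 < Bhat g r x" by (rule Bhat_pos[OF g q])
  have "rprod r (sphere_map g r x) (sphere_map g r x)
      = ((qhat r (fst x))^2 + (Ahat g r x)^2 / (hh g)^2) / Bhat g r x"
    unfolding sphere_map_def rprod_def using B hh_pos[OF g] rform_self_eq_qhat_sq[OF q]
    by (simp add: rform_linear field_simps power2_eq_square)
  also have "\<dots> = 1 / (hh g)^2"
  proof -
    have "(qhat r (fst x))^2 + (Ahat g r x)^2 / (hh g)^2 = Bhat g r x / (hh g)^2"
      unfolding Bhat_eq_sum_squares[OF g, of r x] using hh_pos[OF g] by (simp add: field_simps)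
    then show ?thesis using B by simp
  qed
  finally show ?thesis .
qed

lemma DERIV_Bhat_curve:
  assumes sym: "transpose r = r"
    and dR: "\<And>a. ((\<lambda>t. fst (c t) $ a) has_real_derivative fst d $ a) (at t0)"
    and dZ: "((\<lambda>t. snd (c t)) has_real_derivative snd d) (at t0)"
    and q: "0 < qhat r (fst (c t0))"
  shows "((\<lambda>t. Bhat g r (c t)) has_real_derivative dBhat g r (c t0) d) (at t0)"
  unfolding Bhat_def dBhat_def
  by (rule derivative_eq_intros DERIV_qhat_curve[OF sym dR q] dZ refl | simp)+ (simp add: algebra_simps)

lemma DERIV_inverse_sqrt_Bhat_curve:
  assumes g: "-2 < g" "g < 2" and sym: "transpose r = r"
    and dR: "\<And>a. ((\<lambda>t. fst (c t) $ a) has_real_derivative fst d $ a) (at t0)"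
    and dZ: "((\<lambda>t. snd (c t)) has_real_derivative snd d) (at t0)"
    and q: "0 < qhat r (fst (c t0))"
  shows "((\<lambda>t. inverse (sqrt (Bhat g r (c t)))) has_real_derivative
    - (dBhat g r (c t0) d / (2 * Bhat g r (c t0))) * inverse (sqrt (Bhat g r (c t0)))) (at t0)"
proof -
  have B: "0 < Bhat g r (c t0)" by (rule Bhat_pos[OF g q])
  then have "sqrt (Bhat g r (c t0)) \<noteq> 0" by simp
  from DERIV_inverse_fun[OF DERIV_chain2[OF DERIV_real_sqrt[OF B] DERIV_Bhat_curve[OF sym dR dZ q]] this]
  show ?thesis using B by (elim DERIV_cong) (simp add: field_simps power2_eq_square)
qed

lemma DERIV_sphere_map_curve:
  assumes g: "-2 < g" "g < 2" and sym: "transpose r = r"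
    and dR: "\<And>a. ((\<lambda>t. fst (c t) $ a) has_real_derivative fst d $ a) (at t0)"
    and dZ: "((\<lambda>t. snd (c t)) has_real_derivative snd d) (at t0)"
    and q: "0 < qhat r (fst (c t0))"
  shows "((\<lambda>t. fst (sphere_map g r (c t)) $ a) has_real_derivative
      fst (sphere_map_deriv g r (c t0) d) $ a) (at t0)"
    and "((\<lambda>t. snd (sphere_map g r (c t))) has_real_derivative
      snd (sphere_map_deriv g r (c t0) d)) (at t0)"
proof -
  note inv_sqrt = DERIV_inverse_sqrt_Bhat_curve[OF g sym dR dZ q]
  have "((\<lambda>t. Ahat g r (c t)) has_real_derivative snd d - g * dqhat r (c t0) d / 2) (at t0)"
    unfolding Ahat_def by (rule derivative_eq_intros DERIV_qhat_curve[OF sym dR q] dZ refl | simp)+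
  note dA = this
  have fst_eq: "(\<lambda>t. fst (sphere_map g r (c t)) $ a) = (\<lambda>t. inverse (sqrt (Bhat g r (c t))) * fst (c t) $ a)"
    by (simp add: sphere_map_def inverse_eq_divide)
  show "((\<lambda>t. fst (sphere_map g r (c t)) $ a) has_real_derivative
      fst (sphere_map_deriv g r (c t0) d) $ a) (at t0)"
    unfolding fst_eq
    by (rule DERIV_cong[OF DERIV_mult[OF inv_sqrt dR[of a]]])
       (simp add: sphere_map_deriv_def inverse_eq_divide algebra_simps)
  have snd_eq: "(\<lambda>t. snd (sphere_map g r (c t)))
      = (\<lambda>t. inverse (hh g) * (inverse (sqrt (Bhat g r (c t))) * Ahat g r (c t)))"
    by (simp add: sphere_map_def inverse_eq_divide)
  show "((\<lambda>t. snd (sphere_map g r (c t))) has_real_derivative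
      snd (sphere_map_deriv g r (c t0) d)) (at t0)"
    unfolding snd_eq
    using Bhat_pos[OF g q] hh_pos[OF g]
    by (intro DERIV_cong[OF DERIV_cmult[OF DERIV_mult[OF inv_sqrt dA]]])
       (simp add: sphere_map_deriv_def inverse_eq_divide field_simps)
qed

lemma tangent_pair_identity:
  fixes q Z g h Zy Zw qy qw A B :: real
  assumes q: "0 < q" and h: "0 < h" "h^2 = 1 - g^2/4"
    and ty: "(Z - g * q) * Zy + q * qy = 0" and tw: "(Z - g * q) * Zw + q * qw = 0"
    and B_def: "B = Z^2 - g * q * Z + q^2" and A_def: "A = Z - g * q / 2"
  defines "ky \<equiv> (2 * Z * Zy - g * (qy * Z + q * Zy) + 2 * q * qy) / (2 * B)"
    and "kw \<equiv> (2 * Z * Zw - g * (qw * Z + q * Zw) + 2 * q * qw) / (2 * B)"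
  shows "(Zy - g * qy) * Zw = - kw * q * qy - ky * q * qw + ky * kw * q^2
    + ((Zy - g * qy / 2) - ky * A) * ((Zw - g * qw / 2) - kw * A) / h^2"
proof -
  have B: "B = A^2 + h^2 * q^2" unfolding B_def A_def h(2) by (simp add: power2_eq_square algebra_simps)
  then have "0 < B" using q h(1) by (simp add: add_nonneg_pos)
  have qy: "qy = - (Z - g * q) * Zy / q" and qw: "qw = - (Z - g * q) * Zw / q"
    using ty tw q by (simp_all add: field_simps)
  have "2 * Z * Zy - g * (qy * Z + q * Zy) + 2 * q * qy = g * Zy * B / q"
    and "2 * Z * Zw - g * (qw * Z + q * Zw) + 2 * q * qw = g * Zw * B / q"
    unfolding qy qw B_def using q by (simp_all add: field_simps power2_eq_square, (simp add: algebra_simps)?)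
  then have ky: "ky = g * Zy / (2 * q)" and kw: "kw = g * Zw / (2 * q)"
    unfolding ky_def kw_def using q \<open>0 < B\<close> by (simp_all add: field_simps)
  have a1: "(Zy - g * qy / 2) - ky * A = h^2 * Zy" and a2: "(Zw - g * qw / 2) - kw * A = h^2 * Zw"
    unfolding ky kw A_def qy qw h(2) using q
    by (simp_all add: field_simps power2_eq_square, (simp add: algebra_simps)?)
  have cancel: "h^2 * Zy * (h^2 * Zw) / h^2 = h^2 * Zy * Zw"
    using h(1) by (simp add: field_simps power2_eq_square)
  show ?thesis
    unfolding a1 a2 cancel unfolding ky kw using q h(1) unfolding qy qw h(2)
    by (simp add: field_simps power2_eq_square, (simp add: algebra_simps)?)
qed

lemma half_hess2_FH_sq_on_indicatrix:
  assumes g: "-2 < g" "g < 2" and sym: "transpose r = r" and q: "0 < qhat r (fst x)"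
    and H: "FH g r x = 1" and w: "tangent_form g r x w = 0"
  shows "1 / 2 * hess2 (\<lambda>Rh. (FH g r Rh)^2) x y w
    = ((snd y - g * dqhat r x y) * snd w + rform r (fst y) (fst w)) / Bhat g r x"
proof -
  have "Jhat_sq g r x = 1 / Bhat g r x"
    using FH_sq_eq[OF g q] H Bhat_pos[OF g q] by (simp add: field_simps)
  show ?thesis
    unfolding hess2_FH_sq_tangent[OF g sym q w] \<open>Jhat_sq g r x = 1 / Bhat g r x\<close>
    using Bhat_pos[OF g q] by (simp add: field_simps)
qed

lemma rprod_sphere_map_deriv:
  assumes g: "-2 < g" "g < 2" and sym: "transpose r = r" and q0: "0 < qhat r (fst x)"
    and H: "FH g r x = 1" and ty: "tangent_form g r x y = 0" and tw: "tangent_form g r x w = 0"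
  shows "1 / 2 * hess2 (\<lambda>Rh. (FH g r Rh)^2) x y w
    = rprod r (sphere_map_deriv g r x y) (sphere_map_deriv g r x w)"
proof -
  define q Z B A h where "q = qhat r (fst x)" and "Z = snd x" and "B = Bhat g r x"
    and "A = Ahat g r x" and "h = hh g"
  define qy qw ky kw where "qy = dqhat r x y" and "qw = dqhat r x w"
    and "ky = dBhat g r x y / (2 * B)" and "kw = dBhat g r x w / (2 * B)"
  have q: "0 < q" using q0 q_def by simp
  have B: "0 < B" unfolding B_def by (rule Bhat_pos[OF g q0])
  have h: "0 < h" "h^2 = 1 - g^2/4" unfolding h_def by (rule hh_pos[OF g], rule hh_squared[OF g])
  have sqrt_B: "sqrt B * sqrt B = B" using B by simp
  have x_y: "rform r (fst x) (fst y) = q * qy" and x_w: "rform r (fst x) (fst w) = q * qw"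
    unfolding qy_def qw_def dqhat_def q_def using q0 by simp_all
  have y_x: "rform r (fst y) (fst x) = q * qy" and w_x: "rform r (fst w) (fst x) = q * qw"
    using x_y x_w rform_commute[OF sym] by metis+
  have x_x: "rform r (fst x) (fst x) = q^2"
    unfolding q_def by (rule rform_self_eq_qhat_sq[OF q0])
  have key: "(snd y - g * qy) * snd w = - kw * q * qy - ky * q * qw + ky * kw * q^2
      + ((snd y - g * qy / 2) - ky * A) * ((snd w - g * qw / 2) - kw * A) / h^2"
    unfolding ky_def kw_def dBhat_def qy_def[symmetric] qw_def[symmetric] q_def[symmetric] Z_def[symmetric]
    by (rule tangent_pair_identity[OF q h])
       (use ty tw x_y x_w in \<open>simp_all add: tangent_form_def q_def Z_def B_def Bhat_def A_def Ahat_def\<close>)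
  have "1 / 2 * hess2 (\<lambda>Rh. (FH g r Rh)^2) x y w = ((snd y - g * qy) * snd w + rform r (fst y) (fst w)) / B"
    unfolding half_hess2_FH_sq_on_indicatrix[OF g sym q0 H tw] qy_def B_def ..
  also have "\<dots> = (rform r (fst y) (fst w) - kw * (q * qy) - ky * (q * qw) + ky * kw * q^2) / B
      + ((snd y - g * qy / 2) - ky * A) * ((snd w - g * qw / 2) - kw * A) / (h^2 * B)"
    unfolding key by (simp add: add_divide_distrib diff_divide_distrib algebra_simps)
  also have "\<dots> = rprod r (sphere_map_deriv g r x y) (sphere_map_deriv g r x w)"
  proof -
    have "rform r (fst (sphere_map_deriv g r x y)) (fst (sphere_map_deriv g r x w))
        = (rform r (fst y) (fst w) - kw * (q * qy) - ky * (q * qw) + ky * kw * q^2) / B"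
      unfolding sphere_map_deriv_def B_def[symmetric] ky_def[symmetric] kw_def[symmetric] using sqrt_B B
      by (simp add: rform_linear y_x x_w x_x field_simps)
    moreover have "snd (sphere_map_deriv g r x y) * snd (sphere_map_deriv g r x w)
        = ((snd y - g * qy / 2) - ky * A) * ((snd w - g * qw / 2) - kw * A) / (h^2 * B)"
      unfolding sphere_map_deriv_def B_def[symmetric] A_def[symmetric] h_def[symmetric]
        ky_def[symmetric] kw_def[symmetric] qy_def[symmetric] qw_def[symmetric]
      using sqrt_B B h(1) by (simp add: field_simps power2_eq_square)
    ultimately show ?thesis unfolding rprod_def by simp
  qed
  finally show ?thesis .
qed

lemma linear_dqhat: "linear (dqhat r x)"
  by (rule linearI) (simp_all add: dqhat_def rform_linear add_divide_distrib)

lemma linear_dBhat: "linear (dBhat g r x)"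
  using linear_dqhat[of r x] unfolding linear_iff dBhat_def by (simp add: algebra_simps)

lemma linear_sphere_map_deriv: "linear (sphere_map_deriv g r x)"
  using linear_dqhat[of r x] linear_dBhat[of g r x] unfolding linear_iff sphere_map_deriv_def
  by (simp add: algebra_simps scaleR_add_left add_divide_distrib diff_divide_distrib)

lemma linear_tangent_form: "linear (tangent_form g r x)"
  by (rule linearI) (simp_all add: tangent_form_def rform_linear algebra_simps)

lemma sphere_map_deriv_inj_on_tangents:
  assumes g: "-2 < g" "g < 2" and q0: "0 < qhat r (fst x)"
    and y: "sphere_map_deriv g r x y = 0" "tangent_form g r x y = 0"
  shows "y = 0"
proof -
  define k q B where "k = dBhat g r x y / (2 * Bhat g r x)" and "q = qhat r (fst x)"
    and "B = Bhat g r x"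
  have B: "0 < B" unfolding B_def by (rule Bhat_pos[OF g q0])
  have q: "0 < q" using q0 q_def by simp
  have "(1 / sqrt B) *\<^sub>R (fst y - k *\<^sub>R fst x) = 0"
    using y(1) unfolding sphere_map_deriv_def k_def B_def by (simp add: prod_eq_iff)
  then have R: "fst y = k *\<^sub>R fst x" using B by simp
  have "(snd y - g * dqhat r x y / 2 - k * Ahat g r x) / (hh g * sqrt B) = 0"
    using y(1) unfolding sphere_map_deriv_def k_def B_def by (simp add: prod_eq_iff)
  then have "snd y - g * dqhat r x y / 2 - k * Ahat g r x = 0" using B hh_pos[OF g] by simp
  moreover have "dqhat r x y = k * q"
    unfolding dqhat_def R rform_linear rform_self_eq_qhat_sq[OF q0] q_def using q0
    by (simp add: power2_eq_square)
  ultimately have Z: "snd y = k * snd x" unfolding Ahat_def q_def by (simp add: algebra_simps)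
  have "k * B = 0"
    using y(2) unfolding tangent_form_def Z R rform_linear rform_self_eq_qhat_sq[OF q0] B_def Bhat_def
    by (simp add: algebra_simps power2_eq_square)
  then have "k = 0" using B by simp
  then show ?thesis using R Z by (simp add: prod_eq_iff)
qed

section \<open>Charts of the co-Finsleroid indicatrix\<close>

context
  fixes g :: real and r :: "real^'m::finite^'m" and U :: "(real^'m) set"
    and \<phi> :: "real^'m \<Rightarrow> (real^'m) \<times> real"
  assumes g: "-2 < g" "g < 2" and sym: "transpose r = r"
    and chart: "coindicatrix_chart g r U \<phi>"
begin

lemma chart_open: "open U"
  using chart unfolding coindicatrix_chart_def by blast

lemma chart_smooth: "smooth_map_on U \<phi>"
  using chart unfolding coindicatrix_chart_def smooth_map_on_def by blast

lemma chart_FH: "v \<in> U \<Longrightarrow> FH g r (\<phi> v) = 1"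
  using chart unfolding coindicatrix_chart_def by blast

lemma chart_qhat_pos: "v \<in> U \<Longrightarrow> 0 < qhat r (fst (\<phi> v))"
  using chart unfolding coindicatrix_chart_def by blast

lemma chart_independent:
  assumes "v \<in> U" "(\<Sum>j\<in>UNIV. b $ j *\<^sub>R dphi \<phi> j v) = 0"
  shows "b = 0"
proof -
  have "inj (\<lambda>i. dphi \<phi> i v)" "independent (range (\<lambda>i. dphi \<phi> i v))"
    using chart assms(1) unfolding coindicatrix_chart_def by blast+
  from independent_coeffs_eq_0[OF this, of "\<lambda>j. b $ j"] show ?thesis
    using assms(2) by (simp add: vec_eq_iff)
qed

lemma chart_tangent:
  assumes v: "v \<in> U"
  shows "tangent_form g r (\<phi> v) (dphi \<phi> i v) = 0"
proof -
  have BJ: "((\<lambda>t. Bhat g r (\<phi> (v + t *\<^sub>R axis i 1)) * Jhat_sq g r (\<phi> (v + t *\<^sub>R axis i 1)))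
      has_real_derivative 2 * Jhat_sq g r (\<phi> v) * tangent_form g r (\<phi> v) (dphi \<phi> i v)) (at 0)"
    using DERIV_Bhat_Jhat_sq_curve[OF g sym smooth_map_on_has_pd[OF chart_smooth v]] chart_qhat_pos[OF v]
    by simp
  have ev: "\<forall>\<^sub>F t in nhds 0.
      Bhat g r (\<phi> (v + t *\<^sub>R axis i 1)) * Jhat_sq g r (\<phi> (v + t *\<^sub>R axis i 1)) = 1"
    using eventually_line_in_open[OF chart_open v, of "axis i 1"]
  proof (rule eventually_mono)
    fix t assume "v + t *\<^sub>R axis i 1 \<in> U"
    then show "Bhat g r (\<phi> (v + t *\<^sub>R axis i 1)) * Jhat_sq g r (\<phi> (v + t *\<^sub>R axis i 1)) = 1"
      using FH_sq_eq[OF g chart_qhat_pos] chart_FH by (metis power_one)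
  qed
  from BJ have "((\<lambda>t. 1) has_real_derivative
      2 * Jhat_sq g r (\<phi> v) * tangent_form g r (\<phi> v) (dphi \<phi> i v)) (at 0)"
    by (subst (asm) DERIV_cong_ev[OF refl ev refl])
  then have "2 * Jhat_sq g r (\<phi> v) * tangent_form g r (\<phi> v) (dphi \<phi> i v) = 0"
    using DERIV_const DERIV_unique by blast
  then show ?thesis by (simp add: Jhat_sq_def)
qed

lemma chart_sphere_map_smooth: "smooth_map_on U (\<lambda>v. sphere_map g r (\<phi> v))"
proof -
  note U = chart_open
  have R: "smooth_fun_on U (\<lambda>v. fst (\<phi> v) $ a)" for a
    using chart_smooth unfolding smooth_map_on_def by blast
  have Z: "smooth_fun_on U (\<lambda>v. snd (\<phi> v))"
    using chart_smooth unfolding smooth_map_on_def by blast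
  have "smooth_fun_on U (\<lambda>v. rform r (fst (\<phi> v)) (fst (\<phi> v)))"
    unfolding rform_def by (intro smooth_fun_on_sum[OF U] smooth_fun_on_mult[OF U] smooth_fun_on_const[OF U] R) auto
  then have q: "smooth_fun_on U (\<lambda>v. qhat r (fst (\<phi> v)))"
    unfolding qhat_eq_sqrt_rform using chart_qhat_pos
    by (intro smooth_fun_on_sqrt[OF U]) (simp_all add: qhat_eq_sqrt_rform)
  have B_pos: "0 < Bhat g r (\<phi> v)" if "v \<in> U" for v
    using Bhat_pos[OF g chart_qhat_pos[OF that]] .
  then have B_nonzero: "Bhat g r (\<phi> v) \<noteq> 0" if "v \<in> U" for v
    using that by (metis less_irrefl)
  have "smooth_fun_on U (\<lambda>v. Bhat g r (\<phi> v))"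
    unfolding Bhat_def
    by (intro smooth_fun_on_add[OF U] smooth_fun_on_diff[OF U] smooth_fun_on_power[OF U]
        smooth_fun_on_mult[OF U] smooth_fun_on_const[OF U] Z q)
  then have sqrt_B: "smooth_fun_on U (\<lambda>v. sqrt (Bhat g r (\<phi> v)))"
    using B_pos by (rule smooth_fun_on_sqrt[OF U])
  have A: "smooth_fun_on U (\<lambda>v. Ahat g r (\<phi> v))"
    unfolding Ahat_def
    by (intro smooth_fun_on_diff[OF U] smooth_fun_on_divide[OF U] smooth_fun_on_mult[OF U]
        smooth_fun_on_const[OF U] Z q) simp
  show ?thesis
    unfolding smooth_map_on_def sphere_map_def using B_nonzero hh_pos[OF g]
    by (auto intro!: smooth_fun_on_mult[OF U] smooth_fun_on_divide[OF U] smooth_fun_on_const[OF U]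
        sqrt_B R A)
qed

lemma chart_dphi_sphere_map:
  assumes v: "v \<in> U"
  shows "dphi (\<lambda>v. sphere_map g r (\<phi> v)) i v = sphere_map_deriv g r (\<phi> v) (dphi \<phi> i v)"
proof -
  note curve = DERIV_sphere_map_curve[OF g sym smooth_map_on_has_pd[OF chart_smooth v, where i=i]]
  have "fst (dphi (\<lambda>v. sphere_map g r (\<phi> v)) i v) $ a = fst (sphere_map_deriv g r (\<phi> v) (dphi \<phi> i v)) $ a"
    for a using curve(1) chart_qhat_pos[OF v] by (simp add: pd_eqI)
  moreover have "snd (dphi (\<lambda>v. sphere_map g r (\<phi> v)) i v) = snd (sphere_map_deriv g r (\<phi> v) (dphi \<phi> i v))"
    using curve(2) chart_qhat_pos[OF v] by (simp add: pd_eqI)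
  ultimately show ?thesis by (simp add: prod_eq_iff vec_eq_iff)
qed

lemma chart_ind_metric:
  assumes v: "v \<in> U"
  shows "ind_metric g r \<phi> i j v
    = rprod r (dphi (\<lambda>v. sphere_map g r (\<phi> v)) i v) (dphi (\<lambda>v. sphere_map g r (\<phi> v)) j v)"
  unfolding ind_metric_def chart_dphi_sphere_map[OF v]
  by (rule rprod_sphere_map_deriv[OF g sym chart_qhat_pos[OF v] chart_FH[OF v] chart_tangent[OF v] chart_tangent[OF v]])

lemma chart_sphere_map_independent:
  assumes v: "v \<in> U" and b: "(\<Sum>j\<in>UNIV. b $ j *\<^sub>R dphi (\<lambda>v. sphere_map g r (\<phi> v)) j v) = 0"
  shows "b = 0"
proof (rule chart_independent[OF v])
  let ?y = "\<Sum>j\<in>UNIV. b $ j *\<^sub>R dphi \<phi> j v"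
  have "sphere_map_deriv g r (\<phi> v) ?y = 0"
    using b unfolding chart_dphi_sphere_map[OF v]
    by (simp add: linear_sum[OF linear_sphere_map_deriv] linear_scale[OF linear_sphere_map_deriv] o_def)
  moreover have "tangent_form g r (\<phi> v) ?y = 0"
    by (simp add: linear_sum[OF linear_tangent_form] linear_scale[OF linear_tangent_form] o_def chart_tangent[OF v])
  ultimately show "?y = 0"
    by (rule sphere_map_deriv_inj_on_tangents[OF g chart_qhat_pos[OF v]])
qed

lemma sphere_chart_sphere_map:
  assumes pos: "\<forall>X. X \<noteq> 0 \<longrightarrow> 0 < X \<bullet> (r *v X)"
  shows "sphere_chart U r (\<lambda>v. sphere_map g r (\<phi> v)) (1 / (hh g)^2) (ind_metric g r \<phi>)"
proof
  show "rprod r (sphere_map g r (\<phi> v)) (sphere_map g r (\<phi> v)) = 1 / (hh g)^2" if "v \<in> U" for v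
    by (rule rprod_sphere_map_self[OF g chart_qhat_pos[OF that]])
  show "0 < 1 / (hh g)^2" using hh_pos[OF g] by simp
qed (use chart_open sym pos chart_sphere_map_smooth chart_sphere_map_independent chart_ind_metric in auto)

end

theorem theorem2p6:
  fixes g :: real and r :: "real^'m::finite^'m" and U :: "(real^'m) set"
    and \<phi> :: "real^'m \<Rightarrow> (real^'m) \<times> real" and u :: "real^'m"
  assumes "-2 < g" and "g < 2"
    and "transpose r = r" and "\<forall>x. x \<noteq> 0 \<longrightarrow> 0 < x \<bullet> (r *v x)"
    and "coindicatrix_chart g r U \<phi>" and "u \<in> U"
  shows "(\<forall>l i j k. Riem (ind_metric g r \<phi>) l i j k u =
            (hh g)^2 * (ind_metric g r \<phi> l j u * ind_metric g r \<phi> i k u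
                        - ind_metric g r \<phi> l k u * ind_metric g r \<phi> i j u))
         \<and> (hh g)^2 = 1 - g^2/4 \<and> (hh g)^2 = - discB g / 4
         \<and> 0 < (hh g)^2 \<and> (hh g)^2 \<le> 1"
proof -
  interpret sphere_chart U r "\<lambda>v. sphere_map g r (\<phi> v)" "1 / (hh g)^2" "ind_metric g r \<phi>"
    by (rule sphere_chart_sphere_map[OF assms(1,2,3,5,4)])
  have "Riem (ind_metric g r \<phi>) l i j k u =
      (hh g)^2 * (ind_metric g r \<phi> l j u * ind_metric g r \<phi> i k u
                  - ind_metric g r \<phi> l k u * ind_metric g r \<phi> i j u)" for l i j k
    using gauss_equation[OF assms(6)] by simp
  moreover have "(hh g)^2 = 1 - g^2/4" by (rule hh_squared[OF assms(1,2)])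
  moreover have "g^2 < 4" by (rule square_less_4[OF assms(1,2)])
  ultimately show ?thesis unfolding discB_def by simp
qed

end
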